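(* Let $d$ be prime, $n\ge1$, and let $s,t\in\mathbb Z_d$ with $s,t\not\equiv0$ and $s^2+t^2\equiv1\pmod d$; let $\boxtimes=\boxtimes_{s,t}$ be the discrete beam splitter convolution, and define $\boxtimes^0\rho=\rho$, $\boxtimes^{N+1}\rho=(\boxtimes^N\rho)\boxtimes\rho$. If $\rho$ is a zero-mean $n$-qudit state, then for all $N\ge0$ $$\|\boxtimes^N\rho-\mathcal M(\rho)\|_2\le(1-MG(\rho))^N\|\rho-\mathcal M(\rho)\|_2 .$$ Moreover, if $\rho\neq\mathcal M(\rho)$ then $MG(\rho)>0$, so the convergence is exponentially fast.
   Context: Fix a prime $d$; $\chi(k)=e^{2\pi ik/d}$, $X|k\rangle=|k+1\rangle$, $Z|k\rangle=\chi(k)|k\rangle$ on $\mathbb C^d$; Weyl operators $w(p,q)=\chi(-2^{-1}pq)Z^pX^q$ (odd $d$), $w(p,q)=i^{-pq}Z^pX^q$ ($d=2$), $w(\vec p,\vec q)=\bigotimes_kw(p_k,q_k)$ for $(\vec p,\vec q)\in V^n=\mathbb Z_d^n\times\mathbb Z_d^n$; characteristic function $\Xi_\rho(\vec p,\vec q)=\mathrm{Tr}[\rho\,w(-\vec p,-\vec q)]$, support $\mathrm{Supp}(\Xi_\rho)=\{\vec x:\Xi_\rho(\vec x)\neq0\}$. The mean state $\mathcal M(\rho)$ has $\Xi_{\mathcal M(\rho)}(\vec x)=\Xi_\rho(\vec x)$ if $|\Xi_\rho(\vec x)|=1$ and $0$ otherwise; $\rho$ is zero-mean if $\Xi_{\mathcal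 M(\rho)}$ takes values only in $\{0,1\}$. Magic gap: $MG(\rho)=1-\max\{|\Xi_\rho(\vec x)|:\vec x\in\mathrm{Supp}(\Xi_\rho),|\Xi_\rho(\vec x)|\ne1\}$, with $MG(\rho)=0$ if the set is empty. Discrete beam splitter: the unitary $U_{s,t}|\vec i\rangle\otimes|\vec j\rangle=|s\vec i+t\vec j\rangle\otimes|t\vec i-s\vec j\rangle$ on $(\mathbb C^d)^{\otimes n}\otimes(\mathbb C^d)^{\otimes n}$, and $\rho\boxtimes_{s,t}\sigma=\mathrm{Tr}_B[U_{s,t}(\rho\otimes\sigma)U_{s,t}^\dagger]$; its characteristic function satisfies $\Xi_{\rho\boxtimes_{s,t}\sigma}(\vec x)=\Xi_\rho(s\vec x)\Xi_\sigma(t\vec x)$. $\|A\|_2=(\mathrm{Tr}A^\dagger A)^{1/2}$. *)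

theory Defs
  imports "HOL-Analysis.Analysis" "HOL-Number_Theory.Cong"
begin

text \<open>n-qudit operators on (C^d)^{tensor n} are represented by their matrix entries
  in the computational basis. A basis label is a function k :: nat => nat in
  kets d n = PiE {..<n} (%_. {..<d}), i.e. (k 0, ..., k (n-1)) in Z_d^n.
  An operator is A :: ket => ket => complex with A i j = <i|A|j>; all operators
  we construct vanish outside kets x kets.\<close>

type_synonym ket = "nat \<Rightarrow> nat"
type_synonym op = "ket \<Rightarrow> ket \<Rightarrow> complex"

definition kets :: "nat \<Rightarrow> nat \<Rightarrow> ket set" where
  "kets d n = PiE {..<n} (\<lambda>_. {..<d})"

definition op_on :: "nat \<Rightarrow> nat \<Rightarrow> op \<Rightarrow> bool" where
  "op_on d n A \<longleftrightarrow> (\<forall>i j. (i \<notin> kets d n \<or> j \<notin> kets d n) \<longrightarrow> A i j = 0)"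

definition op_mult :: "nat \<Rightarrow> nat \<Rightarrow> op \<Rightarrow> op \<Rightarrow> op" where
  "op_mult d n A B = (\<lambda>i j. if i \<in> kets d n \<and> j \<in> kets d n
      then (\<Sum>k\<in>kets d n. A i k * B k j) else 0)"

definition op_adj :: "op \<Rightarrow> op" where
  "op_adj A = (\<lambda>i j. cnj (A j i))"

definition op_trace :: "nat \<Rightarrow> nat \<Rightarrow> op \<Rightarrow> complex" where
  "op_trace d n A = (\<Sum>k\<in>kets d n. A k k)"

definition norm2 :: "nat \<Rightarrow> nat \<Rightarrow> op \<Rightarrow> real" where
  "norm2 d n A = sqrt (Re (op_trace d n (op_mult d n (op_adj A) A)))"

definition is_state :: "nat \<Rightarrow> nat \<Rightarrow> op \<Rightarrow> bool" where
  "is_state d n \<rho> \<longleftrightarrow> op_on d n \<rho>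
     \<and> (\<forall>i\<in>kets d n. \<forall>j\<in>kets d n. \<rho> i j = cnj (\<rho> j i))
     \<and> (\<forall>v :: ket \<Rightarrow> complex.
          0 \<le> Re (\<Sum>i\<in>kets d n. \<Sum>j\<in>kets d n. cnj (v i) * \<rho> i j * v j))
     \<and> op_trace d n \<rho> = 1"

definition chi :: "nat \<Rightarrow> int \<Rightarrow> complex" where
  "chi d k = cis (2 * pi * of_int k / of_nat d)"

definition inv2 :: "nat \<Rightarrow> int" where
  "inv2 d = (SOME h. [2 * h = 1] (mod int d))"

text \<open>Single-qudit Weyl operator entries <j| w(p,q) |k>, with
  Z^p X^q |k> = chi(p (k+q)) |k+q>; phase chi(-2^{-1} p q) (d odd) or i^{-pq} (d = 2).\<close>
definition weyl1 :: "nat \<Rightarrow> nat \<Rightarrow> nat \<Rightarrow> nat \<Rightarrow> nat \<Rightarrow> complex" where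
  "weyl1 d p q j k =
     (if d = 2 then inverse (\<i> ^ (p * q)) else chi d (- inv2 d * int p * int q))
     * (if j = (k + q) mod d then chi d (int p * int j) else 0)"

definition weyl :: "nat \<Rightarrow> nat \<Rightarrow> ket \<Rightarrow> ket \<Rightarrow> op" where
  "weyl d n p q = (\<lambda>j k. if j \<in> kets d n \<and> k \<in> kets d n
      then (\<Prod>l<n. weyl1 d (p l) (q l) (j l) (k l)) else 0)"

definition phase_space :: "nat \<Rightarrow> nat \<Rightarrow> (ket \<times> ket) set" where
  "phase_space d n = kets d n \<times> kets d n"

definition vneg :: "nat \<Rightarrow> nat \<Rightarrow> ket \<Rightarrow> ket" where
  "vneg d n p = (\<lambda>l\<in>{..<n}. (d - p l) mod d)"

definition char_fun :: "nat \<Rightarrow> nat \<Rightarrow> op \<Rightarrow> ket \<times> ket \<Rightarrow> complex" where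
  "char_fun d n \<rho> x = op_trace d n (op_mult d n \<rho> (weyl d n (vneg d n (fst x)) (vneg d n (snd x))))"

definition mean_state :: "nat \<Rightarrow> nat \<Rightarrow> op \<Rightarrow> op" where
  "mean_state d n \<rho> = (THE \<sigma>. op_on d n \<sigma> \<and>
      (\<forall>x\<in>phase_space d n. char_fun d n \<sigma> x =
          (if cmod (char_fun d n \<rho> x) = 1 then char_fun d n \<rho> x else 0)))"

definition zero_mean :: "nat \<Rightarrow> nat \<Rightarrow> op \<Rightarrow> bool" where
  "zero_mean d n \<rho> \<longleftrightarrow>
     (\<forall>x\<in>phase_space d n. char_fun d n (mean_state d n \<rho>) x \<in> {0, 1})"

definition magic_gap :: "nat \<Rightarrow> nat \<Rightarrow> op \<Rightarrow> real" where
  "magic_gap d n \<rho> =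
    (let S = {cmod (char_fun d n \<rho> x) | x. x \<in> phase_space d n
                 \<and> char_fun d n \<rho> x \<noteq> 0 \<and> cmod (char_fun d n \<rho> x) \<noteq> 1}
     in if S = {} then 0 else 1 - Max S)"

definition vlin :: "nat \<Rightarrow> nat \<Rightarrow> int \<Rightarrow> ket \<Rightarrow> int \<Rightarrow> ket \<Rightarrow> ket" where
  "vlin d n a i b j = (\<lambda>l\<in>{..<n}. nat ((a * int (i l) + b * int (j l)) mod int d))"

text \<open>Discrete beam splitter U_{s,t} |i>|j> = |s i + t j>|t i - s j>, as a matrix on the
  2n-qudit basis labels (pairs of labels).\<close>
definition beam_U :: "nat \<Rightarrow> nat \<Rightarrow> int \<Rightarrow> int \<Rightarrow> ket \<times> ket \<Rightarrow> ket \<times> ket \<Rightarrow> complex" where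
  "beam_U d n s t ab ij =
     (if fst ab = vlin d n s (fst ij) t (snd ij) \<and> snd ab = vlin d n t (fst ij) (-s) (snd ij)
      then 1 else 0)"

text \<open>rho boxtimes_{s,t} sigma = Tr_B[U (rho tensor sigma) U^dagger].\<close>
definition beam_conv :: "nat \<Rightarrow> nat \<Rightarrow> int \<Rightarrow> int \<Rightarrow> op \<Rightarrow> op \<Rightarrow> op" where
  "beam_conv d n s t \<rho> \<sigma> = (\<lambda>a a'.
     if a \<in> kets d n \<and> a' \<in> kets d n then
       (\<Sum>b\<in>kets d n.
          \<Sum>ij\<in>kets d n \<times> kets d n. \<Sum>ij'\<in>kets d n \<times> kets d n.
            beam_U d n s t (a, b) ij * (\<rho> (fst ij) (fst ij') * \<sigma> (snd ij) (snd ij'))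
            * cnj (beam_U d n s t (a', b) ij'))
     else 0)"

fun beam_pow :: "nat \<Rightarrow> nat \<Rightarrow> int \<Rightarrow> int \<Rightarrow> nat \<Rightarrow> op \<Rightarrow> op" where
  "beam_pow d n s t 0 \<rho> = \<rho>"
| "beam_pow d n s t (Suc N) \<rho> = beam_conv d n s t (beam_pow d n s t N \<rho>) \<rho>"

end

theory Submission imports Defs begin

text \<open>The characteristic function turns the beam splitter into a product: the
  \<open>(N+1)\<close>-st iterate has \<open>\<Xi>\<close>-value at \<open>x\<close> equal to that of the \<open>N\<close>-th iterate at \<open>s x\<close>
  times \<open>\<Xi>\<^sub>\<rho>(t x)\<close>. For a state \<open>|\<Xi>\<^sub>\<rho>| \<le> 1\<close>, and \<open>\<Xi>\<^sub>\<rho>(x) = 1\<close> forces \<open>\<rho> w(-x) = \<rho>\<close>, so the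
  stabilizer \<open>G = {x. \<Xi>\<^sub>\<rho>(x) = 1}\<close> is closed under scaling. For a zero-mean state \<open>G\<close> is
  exactly where \<open>|\<Xi>\<^sub>\<rho>| = 1\<close>, and the mean state has the indicator of \<open>G\<close> as characteristic
  function. Every iterate equals 1 on \<open>G\<close>; off \<open>G\<close> the factor \<open>\<Xi>\<^sub>\<rho>(t x)\<close> has modulus at most
  \<open>1 - MG(\<rho>)\<close>, and \<open>x \<mapsto> s x\<close> permutes the complement of \<open>G\<close>. So the squared \<open>\<ell>\<^sup>2\<close>-distance of
  the characteristic functions from that of the mean state shrinks by \<open>(1 - MG(\<rho>))\<^sup>2\<close> per
  step, and Parseval for the Weyl basis turns this into the Hilbert-Schmidt bound.\<close>

section \<open>Characters and finite sums\<close>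

lemma chi_add: "chi d (a + b) = chi d a * chi d b"
  by (simp add: chi_def cis_mult distrib_left add_divide_distrib)

lemma chi_zero [simp]: "chi d 0 = 1"
  by (simp add: chi_def)

lemma cnj_chi: "cnj (chi d a) = chi d (- a)"
  by (simp add: chi_def cis_cnj)

lemma norm_chi [simp]: "cmod (chi d a) = 1"
  by (simp add: chi_def)

lemma chi_mult_cnj [simp]: "chi d a * cnj (chi d a) = 1"
  by (metis complex_norm_square norm_chi of_real_1 power_one)

lemma chi_cong:
  assumes "d > 0" "int d dvd (b - a)"
  shows "chi d a = chi d b"
proof -
  obtain k where k: "b - a = int d * k" using assms(2) by blast
  have "b = a + int d * k" using k by simp
  hence "2 * pi * of_int b / of_nat d = 2 * pi * of_int a / of_nat d + 2 * pi * of_int k"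
    using assms(1) by (simp add: field_simps)
  hence "chi d b = chi d a * cis (2 * pi * of_int k)"
    by (simp add: chi_def cis_mult[symmetric])
  also have "cis (2 * pi * of_int k) = 1" by simp
  finally show ?thesis by simp
qed

lemma chi_eq_1_iff:
  assumes "d > 0"
  shows "chi d a = 1 \<longleftrightarrow> int d dvd a"
proof
  assume "int d dvd a"
  then show "chi d a = 1" using chi_cong[OF assms, of 0 a] by simp
next
  assume "chi d a = 1"
  hence "cos (2 * pi * of_int a / of_nat d) = 1"
    by (metis Re_complex_of_real chi_def cis.sel(1) complex_Re_numeral complex_of_real_def numeral_One)
  then obtain m :: int where m: "2 * pi * of_int a / of_nat d = of_int m * (2 * pi)"
    by (auto simp: cos_one_2pi_int)
  hence "of_int a = (of_int (m * int d) :: real)" using assms by (simp add: field_simps)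
  hence "a = m * int d" by linarith
  thus "int d dvd a" by simp
qed

lemma chi_power: "chi d a ^ k = chi d (a * int k)"
proof -
  have "chi d a ^ k = cis (real k * (2 * pi * of_int a / of_nat d))" unfolding chi_def by (rule Complex.DeMoivre)
  also have "real k * (2 * pi * of_int a / of_nat d) = 2 * pi * of_int (a * int k) / of_nat d" by simp
  finally show ?thesis by (simp add: chi_def)
qed

lemma sum_chi_multiples:
  assumes "d > 0"
  shows "(\<Sum>j<d. chi d (a * int j)) = (if int d dvd a then of_nat d else 0)"
proof (cases "int d dvd a")
  case True
  hence "\<And>j. chi d (a * int j) = 1" using chi_eq_1_iff[OF assms] by simp
  thus ?thesis using True by simp
next
  case False
  hence ne: "chi d a \<noteq> 1" using chi_eq_1_iff[OF assms] by simp
  have "(\<Sum>j<d. chi d (a * int j)) = (\<Sum>j<d. chi d a ^ j)" by (simp add: chi_power)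
  also have "\<dots> = (chi d a ^ d - 1) / (chi d a - 1)" by (rule geometric_sum[OF ne])
  also have "chi d a ^ d = 1" using chi_eq_1_iff[OF assms] by (simp add: chi_power)
  finally show ?thesis using False by simp
qed

lemma sum_if_dvd_diff:
  assumes "d > 0"
  shows "(\<Sum>c<d. if int d dvd (int c - a) then f c else 0) = f (nat (a mod int d))"
proof -
  have "\<And>c. c < d \<Longrightarrow> int d dvd (int c - a) \<longleftrightarrow> c = nat (a mod int d)"
  proof -
    fix c assume c: "c < d"
    have "int d dvd (int c - a) \<longleftrightarrow> [int c = a] (mod int d)" by (simp add: cong_iff_dvd_diff)
    also have "\<dots> \<longleftrightarrow> c = nat (a mod int d)" using c assms by (auto simp: cong_def)
    finally show "int d dvd (int c - a) \<longleftrightarrow> c = nat (a mod int d)" .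
  qed
  hence "(\<Sum>c<d. if int d dvd (int c - a) then f c else 0) =
         (\<Sum>c<d. if c = nat (a mod int d) then f c else 0)" by (intro sum.cong) auto
  also have "\<dots> = f (nat (a mod int d))"
    using assms by (simp add: nat_less_iff)
  finally show ?thesis .
qed

lemma eq_if_dvd_diff:
  assumes "y < d" "y' < d" "int d dvd (int y - int y')"
  shows "y = y'"
proof -
  have "[int y = int y'] (mod int d)" using assms(3) by (simp add: cong_iff_dvd_diff)
  thus ?thesis using assms(1,2) cong_less_imp_eq_int[of "int y" "int d" "int y'"] by simp
qed

lemma dvd_mod_diff_self: "(m::int) dvd (a mod m - a)"
  using dvd_minus_mod[of m a] by (metis dvd_minus_iff minus_diff_eq)

lemma dvd_linear_combination: "(m::int) dvd D1 \<Longrightarrow> m dvd D2 \<Longrightarrow> X = a * D1 + b * D2 \<Longrightarrow> m dvd X"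
  by simp

text \<open>Modulo \<open>m\<close>, the beam-splitter matrix \<open>[[s, t], [t, -s]]\<close> is an involution.\<close>

lemma rotation_dvd_iff:
  fixes m s t u v Q :: int
  assumes "m dvd (s^2 + t^2 - 1)"
  shows "m dvd (t * u - s * v) \<and> m dvd (s * u + t * v - Q)
           \<longleftrightarrow> m dvd (u - s * Q) \<and> m dvd (v - t * Q)"
proof
  assume A: "m dvd (t * u - s * v) \<and> m dvd (s * u + t * v - Q)"
  have "u - s * Q = s * (s * u + t * v - Q) + t * (t * u - s * v) - u * (s^2 + t^2 - 1)"
    "v - t * Q = t * (s * u + t * v - Q) - s * (t * u - s * v) - v * (s^2 + t^2 - 1)"
    by (simp_all add: algebra_simps power2_eq_square)
  then show "m dvd (u - s * Q) \<and> m dvd (v - t * Q)" using A assms by simp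
next
  assume B: "m dvd (u - s * Q) \<and> m dvd (v - t * Q)"
  have "t * u - s * v = t * (u - s * Q) - s * (v - t * Q)"
    "s * u + t * v - Q = s * (u - s * Q) + t * (v - t * Q) + Q * (s^2 + t^2 - 1)"
    by (simp_all add: algebra_simps power2_eq_square)
  then show "m dvd (t * u - s * v) \<and> m dvd (s * u + t * v - Q)" using B assms by simp
qed

lemma mult_cnj_norm_sq: "z * cnj z = complex_of_real ((cmod z)^2)" "cnj z * z = complex_of_real ((cmod z)^2)"
  by (metis complex_norm_square mult.commute)+

lemma sum_mult_indicator:
  "finite A \<Longrightarrow> (\<Sum>j\<in>A. f j * (if j = a then 1 else (0::'b::comm_semiring_1))) = (if a \<in> A then f a else 0)"
proof -
  have "(\<Sum>j\<in>A. f j * (if j = a then 1 else (0::'b))) = (\<Sum>j\<in>A. if j = a then f j else 0)"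
    by (intro sum.cong) auto
  thus "finite A \<Longrightarrow> ?thesis" by (simp add: sum.delta')
qed

lemma sum_if_const: "(\<Sum>x\<in>S. if P then f x else 0) = (if P then (\<Sum>x\<in>S. f x) else 0)"
  by (cases P) simp_all

lemma sum_swap_nested: "(\<Sum>x\<in>A. \<Sum>u\<in>U. \<Sum>v\<in>V. f x u v) = (\<Sum>u\<in>U. \<Sum>v\<in>V. \<Sum>x\<in>A. f x u v)"
  by (subst sum.swap) (rule sum.cong[OF refl], rule sum.swap)

lemma sum_nested_eq_sum_product: "(\<Sum>k\<in>A. \<Sum>j\<in>B. f k j) = (\<Sum>u\<in>A \<times> B. f (fst u) (snd u))"
  by (simp add: sum.cartesian_product split_def)

lemma parseval_char_fun_orthogonal_kernel:
  fixes a :: "'u \<Rightarrow> complex" and w :: "'x \<Rightarrow> 'u \<Rightarrow> complex"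
  assumes "\<And>u v. u \<in> U \<Longrightarrow> v \<in> U \<Longrightarrow> (\<Sum>x\<in>X. w x u * cnj (w x v)) = (if u = v then c else 0)"
    and "finite U"
  shows "(\<Sum>x\<in>X. (\<Sum>u\<in>U. a u * w x u) * cnj (\<Sum>u\<in>U. a u * w x u)) = c * (\<Sum>u\<in>U. a u * cnj (a u))"
proof -
  have "(\<Sum>x\<in>X. (\<Sum>u\<in>U. a u * w x u) * cnj (\<Sum>u\<in>U. a u * w x u)) =
        (\<Sum>x\<in>X. \<Sum>u\<in>U. \<Sum>v\<in>U. a u * w x u * (cnj (a v) * cnj (w x v)))"
    by (simp add: sum_product)
  also have "\<dots> = (\<Sum>u\<in>U. \<Sum>v\<in>U. \<Sum>x\<in>X. a u * w x u * (cnj (a v) * cnj (w x v)))"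
    by (rule sum_swap_nested)
  also have "\<dots> = (\<Sum>u\<in>U. \<Sum>v\<in>U. (a u * cnj (a v)) * (\<Sum>x\<in>X. w x u * cnj (w x v)))"
    by (simp add: sum_distrib_left mult_ac)
  also have "\<dots> = (\<Sum>u\<in>U. \<Sum>v\<in>U. if u = v then a u * cnj (a v) * c else 0)"
    by (intro sum.cong refl) (simp add: assms(1))
  also have "\<dots> = (\<Sum>u\<in>U. a u * cnj (a u) * c)"
    using assms(2) by (intro sum.cong refl) simp
  finally show ?thesis by (simp add: sum_distrib_left mult_ac)
qed

lemma inversion_orthogonal_kernel:
  fixes w :: "'x \<Rightarrow> 'u \<Rightarrow> complex"
  assumes "\<And>x y. x \<in> X \<Longrightarrow> y \<in> X \<Longrightarrow> (\<Sum>u\<in>U. cnj (w y u) * w x u) = (if x = y then c else 0)"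
    and "finite X" "c \<noteq> 0" "x \<in> X"
  shows "(\<Sum>u\<in>U. ((\<Sum>y\<in>X. f y * cnj (w y u)) / c) * w x u) = f x"
proof -
  have "(\<Sum>u\<in>U. ((\<Sum>y\<in>X. f y * cnj (w y u)) / c) * w x u) =
        (\<Sum>u\<in>U. \<Sum>y\<in>X. f y / c * (cnj (w y u) * w x u))"
    by (simp add: divide_inverse sum_distrib_right sum_distrib_left mult_ac)
  also have "\<dots> = (\<Sum>y\<in>X. f y / c * (\<Sum>u\<in>U. cnj (w y u) * w x u))"
    by (subst sum.swap) (simp add: sum_distrib_left)
  also have "\<dots> = (\<Sum>y\<in>X. if y = x then f y else 0)"
    using assms by (intro sum.cong refl) auto
  also have "\<dots> = f x" using assms by simp
  finally show ?thesis .
qed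

lemma kets_less: "j \<in> kets d n \<Longrightarrow> l < n \<Longrightarrow> j l < d"
  unfolding kets_def by auto

lemma kets_eq_iff: "j \<in> kets d n \<Longrightarrow> j' \<in> kets d n \<Longrightarrow> j = j' \<longleftrightarrow> (\<forall>l<n. j l = j' l)"
  unfolding kets_def by (auto intro: PiE_ext)

lemma finite_kets: "finite (kets d n)"
  unfolding kets_def by (simp add: finite_PiE)

lemma sum_kets_prod:
  "(\<Sum>c\<in>kets d n. \<Prod>l<n. f l (c l)) = (\<Prod>l<n. \<Sum>a<d. (f l a :: complex))"
  unfolding kets_def by (rule prod_sum_PiE[symmetric]) auto

lemma prod_indicator:
  "(\<Prod>l<n. if P l then (c::complex) else 0) = (if \<forall>l<n. P l then c ^ n else 0)"
proof (cases "\<forall>l<n. P l")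
  case True
  hence "(\<Prod>l<n. if P l then c else 0) = (\<Prod>l<n. c)" by (intro prod.cong) auto
  thus ?thesis using True by simp
next
  case False
  then obtain l where "l < n" "\<not> P l" by auto
  hence "(\<Prod>l<n. if P l then c else 0) = 0" by (intro prod_zero) auto
  thus ?thesis using False by simp
qed

lemma finite_phase_space: "finite (phase_space d n)"
  unfolding phase_space_def by (simp add: finite_kets)

definition hs_norm_sq :: "nat \<Rightarrow> nat \<Rightarrow> op \<Rightarrow> real" where
  "hs_norm_sq d n A = (\<Sum>k\<in>kets d n. \<Sum>j\<in>kets d n. (cmod (A k j))\<^sup>2)"

lemma norm2_eq_sqrt_hs_norm_sq: "norm2 d n A = sqrt (hs_norm_sq d n A)"
proof -
  have "Re (op_trace d n (op_mult d n (op_adj A) A)) = (\<Sum>k\<in>kets d n. \<Sum>i\<in>kets d n. (cmod (A i k))\<^sup>2)"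
  proof -
    have "op_trace d n (op_mult d n (op_adj A) A) = (\<Sum>k\<in>kets d n. \<Sum>i\<in>kets d n. cnj (A i k) * A i k)"
      unfolding op_trace_def op_mult_def op_adj_def by (intro sum.cong refl) auto
    also have "\<dots> = (\<Sum>k\<in>kets d n. \<Sum>i\<in>kets d n. complex_of_real ((cmod (A i k))\<^sup>2))"
      by (intro sum.cong refl) (simp only: mult_cnj_norm_sq)
    finally show ?thesis by simp
  qed
  also have "\<dots> = hs_norm_sq d n A" unfolding hs_norm_sq_def by (rule sum.swap)
  finally show ?thesis unfolding norm2_def by simp
qed

lemma hs_norm_sq_eq_0_imp_entry:
  assumes "hs_norm_sq d n A = 0" "k \<in> kets d n" "j \<in> kets d n"
  shows "A k j = 0"
proof -
  have "\<forall>k\<in>kets d n. (\<Sum>j\<in>kets d n. (cmod (A k j))\<^sup>2) = 0"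
    using assms(1) unfolding hs_norm_sq_def
    by (subst sum_nonneg_eq_0_iff[symmetric]) (auto simp: finite_kets intro: sum_nonneg)
  hence "(\<Sum>j\<in>kets d n. (cmod (A k j))\<^sup>2) = 0" using assms(2) by blast
  hence "\<forall>j\<in>kets d n. (cmod (A k j))\<^sup>2 = 0"
    by (subst sum_nonneg_eq_0_iff[symmetric]) (auto simp: finite_kets)
  thus ?thesis using assms(3) by simp
qed

section \<open>States\<close>

definition qform :: "nat \<Rightarrow> nat \<Rightarrow> op \<Rightarrow> (ket \<Rightarrow> complex) \<Rightarrow> (ket \<Rightarrow> complex) \<Rightarrow> complex" where
  "qform d n \<rho> u w = (\<Sum>i\<in>kets d n. \<Sum>j\<in>kets d n. cnj (u i) * \<rho> i j * w j)"

lemma qform_add_smult: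
  "qform d n \<rho> (\<lambda>i. u i + c * w i) (\<lambda>i. u i + c * w i) =
   qform d n \<rho> u u + c * qform d n \<rho> u w + cnj c * qform d n \<rho> w u + cnj c * c * qform d n \<rho> w w"
proof -
  have "qform d n \<rho> (\<lambda>i. u i + c * w i) (\<lambda>i. u i + c * w i) =
        (\<Sum>i\<in>kets d n. \<Sum>j\<in>kets d n. cnj (u i) * \<rho> i j * u j + c * (cnj (u i) * \<rho> i j * w j)
           + cnj c * (cnj (w i) * \<rho> i j * u j) + cnj c * c * (cnj (w i) * \<rho> i j * w j))"
    unfolding qform_def by (intro sum.cong refl) (simp add: algebra_simps)
  also have "\<dots> = qform d n \<rho> u u + c * qform d n \<rho> u w + cnj c * qform d n \<rho> w u + cnj c * c * qform d n \<rho> w w"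
    unfolding qform_def by (simp add: sum.distrib sum_distrib_left)
  finally show ?thesis .
qed

lemma qform_basis_left:
  assumes "a \<in> kets d n"
  shows "qform d n \<rho> (\<lambda>i. if i = a then 1 else 0) w = (\<Sum>j\<in>kets d n. \<rho> a j * w j)"
proof -
  have "qform d n \<rho> (\<lambda>i. if i = a then 1 else 0) w =
        (\<Sum>i\<in>kets d n. if i = a then (\<Sum>j\<in>kets d n. \<rho> a j * w j) else 0)"
    unfolding qform_def by (intro sum.cong refl) auto
  also have "\<dots> = (\<Sum>j\<in>kets d n. \<rho> a j * w j)" using assms finite_kets by simp
  finally show ?thesis .
qed

lemma qform_basis_right:
  assumes "a \<in> kets d n"
  shows "qform d n \<rho> u (\<lambda>i. if i = a then 1 else 0) = (\<Sum>i\<in>kets d n. cnj (u i) * \<rho> i a)"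
proof -
  have "qform d n \<rho> u (\<lambda>i. if i = a then 1 else 0) =
        (\<Sum>i\<in>kets d n. \<Sum>j\<in>kets d n. if j = a then cnj (u i) * \<rho> i a else 0)"
    unfolding qform_def by (intro sum.cong refl) auto
  also have "\<dots> = (\<Sum>i\<in>kets d n. cnj (u i) * \<rho> i a)" using assms finite_kets by simp
  finally show ?thesis .
qed

lemma qform_cnj:
  assumes "\<And>i j. i \<in> kets d n \<Longrightarrow> j \<in> kets d n \<Longrightarrow> \<rho> i j = cnj (\<rho> j i)"
  shows "qform d n \<rho> w u = cnj (qform d n \<rho> u w)"
proof -
  have "cnj (qform d n \<rho> u w) = (\<Sum>i\<in>kets d n. \<Sum>j\<in>kets d n. cnj (cnj (u i) * \<rho> i j * w j))"
    unfolding qform_def by simp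
  also have "\<dots> = (\<Sum>i\<in>kets d n. \<Sum>j\<in>kets d n. cnj (w j) * \<rho> j i * u i)"
  proof (intro sum.cong refl)
    fix i j assume "i \<in> kets d n" "j \<in> kets d n"
    hence "cnj (\<rho> i j) = \<rho> j i" using assms[of j i] by simp
    thus "cnj (cnj (u i) * \<rho> i j * w j) = cnj (w j) * \<rho> j i * u i" by (simp add: mult_ac)
  qed
  also have "\<dots> = qform d n \<rho> w u" unfolding qform_def by (rule sum.swap)
  finally show ?thesis by simp
qed

lemma is_stateD:
  assumes "is_state d n \<rho>"
  shows "op_on d n \<rho>" "\<And>i j. i \<in> kets d n \<Longrightarrow> j \<in> kets d n \<Longrightarrow> \<rho> i j = cnj (\<rho> j i)"
    "\<And>v. 0 \<le> Re (qform d n \<rho> v v)" "(\<Sum>k\<in>kets d n. \<rho> k k) = 1"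
proof -
  show "op_on d n \<rho>" using assms unfolding is_state_def by blast
  show "\<And>i j. i \<in> kets d n \<Longrightarrow> j \<in> kets d n \<Longrightarrow> \<rho> i j = cnj (\<rho> j i)"
    using assms unfolding is_state_def by blast
  show "\<And>v. 0 \<le> Re (qform d n \<rho> v v)" using assms unfolding is_state_def qform_def by blast
  show "(\<Sum>k\<in>kets d n. \<rho> k k) = 1" using assms unfolding is_state_def op_trace_def by blast
qed

text \<open>Positivity of \<open>\<rho>\<close> tested on \<open>v - \<epsilon> z e\<^sub>a\<close>, with \<open>z = (\<rho> v)\<^sub>a\<close> and small \<open>\<epsilon> > 0\<close>.\<close>

lemma state_qform_eq_0_imp:
  assumes st: "is_state d n \<rho>" and v0: "Re (qform d n \<rho> v v) = 0" and a: "a \<in> kets d n"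
  shows "(\<Sum>j\<in>kets d n. \<rho> a j * v j) = 0"
proof -
  note sp = is_stateD[OF st]
  define e where "e = (\<lambda>i. if i = a then (1::complex) else 0)"
  define z where "z = (\<Sum>j\<in>kets d n. \<rho> a j * v j)"
  define r where "r = Re (\<rho> a a)"
  define q where "q = (cmod z)^2"
  define \<epsilon> :: real where "\<epsilon> = 1 / (r + 1)"
  define \<tau> where "\<tau> = - complex_of_real \<epsilon> * z"
  have ze: "qform d n \<rho> e v = z" unfolding e_def z_def by (rule qform_basis_left[OF a])
  have ez: "qform d n \<rho> v e = cnj z" unfolding ze[symmetric] by (rule qform_cnj[OF sp(2)])
  have ee: "qform d n \<rho> e e = \<rho> a a"
    unfolding e_def qform_basis_left[OF a] using a finite_kets by (simp add: sum_mult_indicator)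
  have r0: "r \<ge> 0" using sp(3)[of e] unfolding ee r_def .
  have eps: "\<epsilon> > 0" "\<epsilon> * r < 1" using r0 unfolding \<epsilon>_def by (auto simp: field_simps)
  have zz: "z * cnj z = complex_of_real q" "cnj z * z = complex_of_real q"
    unfolding q_def by (rule mult_cnj_norm_sq)+
  have "\<tau> * cnj z = - complex_of_real \<epsilon> * (z * cnj z)"
    "cnj \<tau> * z = - complex_of_real \<epsilon> * (cnj z * z)"
    "cnj \<tau> * \<tau> = complex_of_real \<epsilon> * complex_of_real \<epsilon> * (cnj z * z)"
    unfolding \<tau>_def by (simp_all only: complex_cnj_mult complex_cnj_minus complex_cnj_complex_of_real
        mult_minus_left mult_minus_right minus_minus mult_ac)
  then have "\<tau> * cnj z = - complex_of_real (\<epsilon> * q)" "cnj \<tau> * z = - complex_of_real (\<epsilon> * q)"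
    "cnj \<tau> * \<tau> = complex_of_real (\<epsilon>^2 * q)"
    unfolding zz by (simp_all add: power2_eq_square)
  then have "qform d n \<rho> (\<lambda>i. v i + \<tau> * e i) (\<lambda>i. v i + \<tau> * e i)
               = qform d n \<rho> v v - 2 * complex_of_real (\<epsilon> * q) + complex_of_real (\<epsilon>^2 * q) * \<rho> a a"
    unfolding qform_add_smult ze ez ee by simp
  from arg_cong[OF this, of Re]
  have "Re (qform d n \<rho> (\<lambda>i. v i + \<tau> * e i) (\<lambda>i. v i + \<tau> * e i)) = \<epsilon> * (q * (\<epsilon> * r - 2))"
    using v0 unfolding r_def by (simp add: algebra_simps power2_eq_square)
  moreover have "0 \<le> Re (qform d n \<rho> (\<lambda>i. v i + \<tau> * e i) (\<lambda>i. v i + \<tau> * e i))" by (rule sp(3))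
  ultimately have "0 \<le> \<epsilon> * (q * (\<epsilon> * r - 2))" by simp
  then have "q \<le> 0" using eps by (simp add: zero_le_mult_iff)
  then show ?thesis unfolding q_def z_def by simp
qed

text \<open>With \<open>e\<^sub>b\<close> the basis vectors, the sum below is the trace of
  \<open>(W - 1)\<^sup>\<dagger> \<rho> (W - 1)\<close>, which equals \<open>2 - 2 Re Tr[\<rho> W]\<close> for unitary \<open>W\<close>.\<close>

lemma sum_qform_unitary_minus_id:
  assumes st: "is_state d n \<rho>"
    and rowU: "\<And>j j'. j \<in> kets d n \<Longrightarrow> j' \<in> kets d n \<Longrightarrow>
                 (\<Sum>c\<in>kets d n. W j c * cnj (W j' c)) = (if j = j' then 1 else 0)"
  shows "(\<Sum>b\<in>kets d n. Re (qform d n \<rho> (\<lambda>i. W i b - (if i = b then 1 else 0))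
                                        (\<lambda>i. W i b - (if i = b then 1 else 0))))
           = 2 - 2 * Re (\<Sum>k\<in>kets d n. \<Sum>j\<in>kets d n. \<rho> k j * W j k)"
proof -
  note sp = is_stateD[OF st]
  define X where "X = (\<Sum>k\<in>kets d n. \<Sum>j\<in>kets d n. \<rho> k j * W j k)"
  define e where "e c = (\<lambda>i. if i = c then (1::complex) else 0)" for c :: ket
  define col where "col c = (\<lambda>i. W i c)" for c :: ket
  define v where "v c = (\<lambda>i. col c i + (-1) * e c i)" for c :: ket
  have v: "(\<lambda>i. W i b - (if i = b then 1 else 0)) = v b" for b
    unfolding v_def col_def e_def by auto
  have sv: "qform d n \<rho> (v b) (v b)
      = qform d n \<rho> (col b) (col b) - qform d n \<rho> (col b) (e b) - qform d n \<rho> (e b) (col b) + \<rho> b b"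
    if b: "b \<in> kets d n" for b
  proof -
    have "qform d n \<rho> (e b) (e b) = \<rho> b b"
      unfolding e_def qform_basis_left[OF b] using b finite_kets by (simp add: sum_mult_indicator)
    then show ?thesis unfolding v_def qform_add_smult by simp
  qed
  have s1: "(\<Sum>b\<in>kets d n. qform d n \<rho> (col b) (col b)) = 1"
  proof -
    have "(\<Sum>b\<in>kets d n. qform d n \<rho> (col b) (col b)) =
          (\<Sum>b\<in>kets d n. \<Sum>i\<in>kets d n. \<Sum>j\<in>kets d n. \<rho> i j * (W j b * cnj (W i b)))"
      unfolding qform_def col_def by (intro sum.cong refl) (simp add: mult_ac)
    also have "\<dots> = (\<Sum>i\<in>kets d n. \<Sum>j\<in>kets d n. \<Sum>b\<in>kets d n. \<rho> i j * (W j b * cnj (W i b)))"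
      by (rule sum_swap_nested)
    also have "\<dots> = (\<Sum>i\<in>kets d n. \<Sum>j\<in>kets d n. if j = i then \<rho> i j else 0)"
      by (intro sum.cong refl) (simp add: sum_distrib_left[symmetric] rowU)
    also have "\<dots> = (\<Sum>i\<in>kets d n. \<rho> i i)" using finite_kets by simp
    finally show ?thesis using sp(4) by simp
  qed
  have s2: "(\<Sum>b\<in>kets d n. qform d n \<rho> (col b) (e b)) = cnj X"
  proof -
    have "(\<Sum>b\<in>kets d n. qform d n \<rho> (col b) (e b)) = (\<Sum>b\<in>kets d n. \<Sum>i\<in>kets d n. cnj (W i b) * \<rho> i b)"
      unfolding e_def col_def by (intro sum.cong refl qform_basis_right)
    also have "\<dots> = (\<Sum>b\<in>kets d n. \<Sum>i\<in>kets d n. cnj (\<rho> b i * W i b))"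
    proof (intro sum.cong refl)
      fix b i assume "b \<in> kets d n" "i \<in> kets d n"
      then have "\<rho> i b = cnj (\<rho> b i)" using sp(2) by blast
      then show "cnj (W i b) * \<rho> i b = cnj (\<rho> b i * W i b)" by (simp add: mult.commute)
    qed
    finally show ?thesis unfolding X_def by simp
  qed
  have s3: "(\<Sum>b\<in>kets d n. qform d n \<rho> (e b) (col b)) = X"
    unfolding X_def e_def col_def by (intro sum.cong refl qform_basis_left)
  have "(\<Sum>b\<in>kets d n. qform d n \<rho> (v b) (v b)) =
        (\<Sum>b\<in>kets d n. qform d n \<rho> (col b) (col b)) - (\<Sum>b\<in>kets d n. qform d n \<rho> (col b) (e b))
         - (\<Sum>b\<in>kets d n. qform d n \<rho> (e b) (col b)) + (\<Sum>b\<in>kets d n. \<rho> b b)"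
    by (simp add: sv sum.distrib sum_subtractf)
  also have "\<dots> = 2 - X - cnj X" using s1 s2 s3 sp(4) by simp
  finally have "(\<Sum>b\<in>kets d n. qform d n \<rho> (v b) (v b))
          = 2 - X - cnj X" .
  from arg_cong[OF this, of Re] show ?thesis unfolding v X_def by (simp only: Re_sum) simp
qed

lemma state_trace_unitary_le_1:
  assumes "is_state d n \<rho>"
    and "\<And>j j'. j \<in> kets d n \<Longrightarrow> j' \<in> kets d n \<Longrightarrow>
                 (\<Sum>c\<in>kets d n. W j c * cnj (W j' c)) = (if j = j' then 1 else 0)"
  shows "Re (\<Sum>k\<in>kets d n. \<Sum>j\<in>kets d n. \<rho> k j * W j k) \<le> 1"
proof -
  have "0 \<le> (\<Sum>b\<in>kets d n. Re (qform d n \<rho> (\<lambda>i. W i b - (if i = b then 1 else 0))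
                                            (\<lambda>i. W i b - (if i = b then 1 else 0))))"
    using is_stateD(3)[OF assms(1)] by (intro sum_nonneg) auto
  then show ?thesis using sum_qform_unitary_minus_id[OF assms] by linarith
qed

lemma state_trace_unitary_eq_1_imp:
  assumes st: "is_state d n \<rho>"
    and rowU: "\<And>j j'. j \<in> kets d n \<Longrightarrow> j' \<in> kets d n \<Longrightarrow>
                 (\<Sum>c\<in>kets d n. W j c * cnj (W j' c)) = (if j = j' then 1 else 0)"
    and X1: "(\<Sum>k\<in>kets d n. \<Sum>j\<in>kets d n. \<rho> k j * W j k) = 1"
    and a: "a \<in> kets d n" and b: "b \<in> kets d n"
  shows "(\<Sum>j\<in>kets d n. \<rho> a j * W j b) = \<rho> a b"
proof -
  let ?v = "\<lambda>b i. W i b - (if i = b then 1 else 0)"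
  have "(\<Sum>b\<in>kets d n. Re (qform d n \<rho> (?v b) (?v b))) = 0"
    using sum_qform_unitary_minus_id[OF st rowU] X1 by simp
  then have "\<forall>b\<in>kets d n. Re (qform d n \<rho> (?v b) (?v b)) = 0"
    using is_stateD(3)[OF st] by (subst sum_nonneg_eq_0_iff[symmetric]) (auto simp: finite_kets)
  then have "(\<Sum>j\<in>kets d n. \<rho> a j * ?v b j) = 0"
    using state_qform_eq_0_imp[OF st _ a] b by blast
  then have "(\<Sum>j\<in>kets d n. \<rho> a j * W j b) - \<rho> a b = 0"
    using b finite_kets by (simp add: right_diff_distrib sum_subtractf sum_mult_indicator)
  then show ?thesis by simp
qed

section \<open>Weyl operators and characteristic functions\<close>

definition weyl_neg :: "nat \<Rightarrow> nat \<Rightarrow> ket \<times> ket \<Rightarrow> op" where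
  "weyl_neg d n x = weyl d n (vneg d n (fst x)) (vneg d n (snd x))"

lemma char_fun_expand: "char_fun d n A x = (\<Sum>k\<in>kets d n. \<Sum>j\<in>kets d n. A k j * weyl_neg d n x j k)"
  unfolding char_fun_def op_trace_def op_mult_def weyl_neg_def by (intro sum.cong refl) auto

lemma char_fun_expand_pairs: "char_fun d n A x = (\<Sum>u\<in>kets d n \<times> kets d n. A (fst u) (snd u) * weyl_neg d n x (snd u) (fst u))"
  unfolding char_fun_expand by (rule sum_nested_eq_sum_product)

lemma char_fun_diff: "char_fun d n (A - B) x = char_fun d n A x - char_fun d n B x"
  unfolding char_fun_expand by (simp add: sum_subtractf left_diff_distrib)

locale odd_prime_qudit =
  fixes d :: nat
  assumes prime_d: "prime d" and d_ne2: "d \<noteq> 2"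
begin

lemma d_gt1: "d > 1" using prime_gt_1_nat prime_d by blast

lemma d_pos: "d > 0" using d_gt1 by simp

lemma d_odd: "odd d" using prime_odd_nat[OF prime_d] d_ne2 d_gt1 by simp

definition half :: int where "half = inv2 d"

lemma half_inverse: "int d dvd (2 * half - 1)"
proof -
  obtain k where k: "d = 2 * k + 1" using d_odd oddE by blast
  have "[2 * (int k + 1) = 1] (mod int d)"
    unfolding cong_iff_dvd_diff using k by simp
  hence ex: "\<exists>h. [2 * h = 1] (mod int d)" by blast
  have "[2 * inv2 d = 1] (mod int d)" unfolding inv2_def by (rule someI_ex[OF ex])
  thus ?thesis unfolding half_def cong_iff_dvd_diff by simp
qed

text \<open>The entry \<open>\<langle>y| w(P, Q) |z\<rangle>\<close> with integer labels, so that negated and scaled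
  phase-space points need no reduction modulo \<open>d\<close>.\<close>

definition weyl1_int :: "int \<Rightarrow> int \<Rightarrow> nat \<Rightarrow> nat \<Rightarrow> complex" where
  "weyl1_int P Q y z = (if int d dvd (int y - int z - Q) then chi d (- half * P * Q + P * int y) else 0)"

lemma weyl1_int_cong:
  assumes "int d dvd (P - P')" "int d dvd (Q - Q')"
  shows "weyl1_int P Q y z = weyl1_int P' Q' y z"
proof -
  have c: "int d dvd (int y - int z - Q) \<longleftrightarrow> int d dvd (int y - int z - Q')"
  proof -
    have "int y - int z - Q' = (int y - int z - Q) + (Q - Q')" by simp
    thus ?thesis using assms(2) by (metis dvd_add_left_iff)
  qed
  have "int d dvd ((- half * P' * Q' + P' * int y) - (- half * P * Q + P * int y))"
    by (rule dvd_linear_combination[OF assms(1) assms(2), of _ "half * Q' - int y" "half * P"]) (simp add: algebra_simps)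
  hence "chi d (- half * P * Q + P * int y) = chi d (- half * P' * Q' + P' * int y)"
    by (rule chi_cong[OF d_pos])
  thus ?thesis unfolding weyl1_int_def using c by simp
qed

lemma weyl1_eq_weyl1_int:
  assumes "y < d" "z < d" "int d dvd (int P - P')" "int d dvd (int Q - Q')"
  shows "weyl1 d P Q y z = weyl1_int P' Q' y z"
proof -
  have c: "y = (z + Q) mod d \<longleftrightarrow> int d dvd (int y - int z - int Q)"
  proof -
    have "int d dvd (int y - int z - int Q) \<longleftrightarrow> [int y = int (z + Q)] (mod int d)"
      by (simp add: cong_iff_dvd_diff diff_diff_eq)
    also have "\<dots> \<longleftrightarrow> [y = z + Q] (mod d)" by (rule cong_int_iff)
    also have "\<dots> \<longleftrightarrow> y = (z + Q) mod d" using assms(1) by (simp add: cong_def)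
    finally show ?thesis by simp
  qed
  have "weyl1 d P Q y z = weyl1_int (int P) (int Q) y z"
    unfolding weyl1_def weyl1_int_def half_def using d_ne2 c
    by (simp add: chi_add[symmetric] mult.assoc)
  also have "\<dots> = weyl1_int P' Q' y z" by (rule weyl1_int_cong[OF assms(3,4)])
  finally show ?thesis .
qed

lemma weyl1_int_rows_orthonormal:
  assumes "y < d" "y' < d"
  shows "(\<Sum>c<d. weyl1_int P Q y c * cnj (weyl1_int P Q y' c)) = (if y = y' then 1 else 0)"
proof (cases "y = y'")
  case False
  have z0: "\<And>c. weyl1_int P Q y c * cnj (weyl1_int P Q y' c) = 0"
  proof -
    fix c
    show "weyl1_int P Q y c * cnj (weyl1_int P Q y' c) = 0"
    proof (cases "int d dvd (int y - int c - Q) \<and> int d dvd (int y' - int c - Q)")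
      case True
      hence "int d dvd ((int y - int c - Q) - (int y' - int c - Q))" by (metis dvd_diff)
      hence "y = y'" using eq_if_dvd_diff[OF assms] by simp
      thus ?thesis using False by simp
    qed (auto simp: weyl1_int_def)
  qed
  show ?thesis using False by (simp add: z0)
next
  case True
  have "(\<Sum>c<d. weyl1_int P Q y c * cnj (weyl1_int P Q y' c)) = (\<Sum>c<d. if int d dvd (int c - (int y - Q)) then 1 else 0)"
  proof (intro sum.cong refl)
    fix c
    have "int d dvd (int y - int c - Q) \<longleftrightarrow> int d dvd (int c - (int y - Q))"
      by (metis dvd_minus_iff minus_diff_eq diff_diff_eq2 diff_diff_eq)
    thus "weyl1_int P Q y c * cnj (weyl1_int P Q y' c) = (if int d dvd (int c - (int y - Q)) then 1 else 0)"
      using True by (simp add: weyl1_int_def)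
  qed
  also have "\<dots> = 1" using sum_if_dvd_diff[OF d_pos, of "int y - Q" "\<lambda>_. 1"] by simp
  finally show ?thesis using True by simp
qed

lemma weyl1_int_mult_multiple:
  "(\<Sum>c<d. weyl1_int (m * P) (m * Q) y c * weyl1_int P Q c z) = weyl1_int ((m + 1) * P) ((m + 1) * Q) y z"
proof -
  define c0 where "c0 = nat ((int z + Q) mod int d)"
  have c0: "int c0 = (int z + Q) mod int d" unfolding c0_def using d_pos by simp
  have c0d: "int d dvd (int c0 - (int z + Q))" unfolding c0 by (metis mod_mod_trivial mod_eq_dvd_iff)
  have "(\<Sum>c<d. weyl1_int (m * P) (m * Q) y c * weyl1_int P Q c z) =
        (\<Sum>c<d. if int d dvd (int c - (int z + Q)) then weyl1_int (m * P) (m * Q) y c * chi d (- half * P * Q + P * int c) else 0)"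
  proof (intro sum.cong refl)
    fix c
    have "int d dvd (int c - int z - Q) \<longleftrightarrow> int d dvd (int c - (int z + Q))"
      by (simp add: diff_diff_eq)
    thus "weyl1_int (m * P) (m * Q) y c * weyl1_int P Q c z = (if int d dvd (int c - (int z + Q)) then weyl1_int (m * P) (m * Q) y c * chi d (- half * P * Q + P * int c) else 0)"
      by (simp add: weyl1_int_def)
  qed
  also have "\<dots> = weyl1_int (m * P) (m * Q) y c0 * chi d (- half * P * Q + P * int c0)"
    unfolding c0_def by (rule sum_if_dvd_diff[OF d_pos])
  also have "\<dots> = weyl1_int ((m + 1) * P) ((m + 1) * Q) y z"
  proof -
    have cond: "int d dvd (int y - int c0 - m * Q) \<longleftrightarrow> int d dvd (int y - int z - (m + 1) * Q)"
    proof -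
      have "int y - int z - (m + 1) * Q = (int y - int c0 - m * Q) + (int c0 - (int z + Q))"
        by (simp add: algebra_simps)
      thus ?thesis using c0d by (metis dvd_add_left_iff)
    qed
    show ?thesis
    proof (cases "int d dvd (int y - int z - (m + 1) * Q)")
      case False thus ?thesis using cond by (simp add: weyl1_int_def)
    next
      case True
      hence E: "int d dvd (int y - int c0 - m * Q)" using cond by simp
      have "int d dvd ((- half * ((m + 1) * P) * ((m + 1) * Q) + (m + 1) * P * int y) -
                      ((- half * (m * P) * (m * Q) + m * P * int y) + (- half * P * Q + P * int c0)))"
        by (rule dvd_linear_combination[OF half_inverse E, of _ "- m * P * Q" "P"]) (simp add: algebra_simps)
      hence "chi d ((- half * (m * P) * (m * Q) + m * P * int y) + (- half * P * Q + P * int c0)) =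
             chi d (- half * ((m + 1) * P) * ((m + 1) * Q) + (m + 1) * P * int y)"
        by (rule chi_cong[OF d_pos])
      thus ?thesis using True E by (simp add: weyl1_int_def chi_add)
    qed
  qed
  finally show ?thesis .
qed

lemma weyl1_int_completeness:
  assumes "k < d" "j < d" "k' < d" "j' < d"
  shows "(\<Sum>a<d. \<Sum>b<d. weyl1_int (- int a) (- int b) k j * cnj (weyl1_int (- int a) (- int b) k' j')) =
         (if k = k' \<and> j = j' then of_nat d else 0)"
proof -
  have inner: "(\<Sum>a<d. weyl1_int (- int a) (- int b) k j * cnj (weyl1_int (- int a) (- int b) k' j')) =
      (if int d dvd (int b - (int j - int k)) then (if k = k' \<and> j = j' then of_nat d else 0) else 0)"
    for b
  proof (cases "int d dvd (int k - int j + int b) \<and> int d dvd (int k' - int j' + int b)")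
    case True
    have "(\<Sum>a<d. weyl1_int (- int a) (- int b) k j * cnj (weyl1_int (- int a) (- int b) k' j')) =
          (\<Sum>a<d. chi d ((int k' - int k) * int a))"
      using True by (intro sum.cong refl) (simp add: weyl1_int_def cnj_chi chi_add[symmetric] algebra_simps)
    also have "\<dots> = (if k = k' then of_nat d else 0)"
      unfolding sum_chi_multiples[OF d_pos] using eq_if_dvd_diff[OF assms(3,1)] by auto
    moreover have "j = j'" if "k = k'"
    proof -
      have "int d dvd ((int k' - int j' + int b) - (int k - int j + int b))"
        using True by (intro dvd_diff) auto
      then show ?thesis using that eq_if_dvd_diff[OF assms(2,4)] by simp
    qed
    ultimately show ?thesis using True by (auto simp: algebra_simps)
  next
    case False
    then have "\<not> (int d dvd (int b - (int j - int k)) \<and> k = k' \<and> j = j')"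
      by (auto simp: algebra_simps)
    then show ?thesis using False by (auto simp: weyl1_int_def)
  qed
  have "(\<Sum>a<d. \<Sum>b<d. weyl1_int (- int a) (- int b) k j * cnj (weyl1_int (- int a) (- int b) k' j')) =
        (\<Sum>b<d. if int d dvd (int b - (int j - int k)) then (if k = k' \<and> j = j' then of_nat d else 0) else 0)"
    by (subst sum.swap) (simp only: inner)
  also have "\<dots> = (if k = k' \<and> j = j' then of_nat d else 0)"
    by (rule sum_if_dvd_diff[OF d_pos])
  finally show ?thesis .
qed

lemma sum_weyl1_int_column:
  "(\<Sum>y<d. cnj (weyl1_int (- int p') (- int q) y z) * weyl1_int (- int p) (- int q) y z) =
   chi d ((int p' - int p) * (half * int q - int q)) * chi d ((int p' - int p) * int z)"
proof -
  define D where "D = int p' - int p"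
  define y0 where "y0 = nat ((int z - int q) mod int d)"
  have "int y0 = (int z - int q) mod int d" unfolding y0_def using d_pos by simp
  then have y0: "int d dvd (int y0 - (int z - int q))" by (metis mod_mod_trivial mod_eq_dvd_iff)
  have "(\<Sum>y<d. cnj (weyl1_int (- int p') (- int q) y z) * weyl1_int (- int p) (- int q) y z) =
        (\<Sum>y<d. if int d dvd (int y - (int z - int q)) then chi d (D * (half * int q + int y)) else 0)"
  proof (intro sum.cong refl)
    fix y
    have "cnj (chi d (- half * - int p' * - int q + - int p' * int y))
            * chi d (- half * - int p * - int q + - int p * int y) = chi d (D * (half * int q + int y))"
      unfolding cnj_chi chi_add[symmetric] D_def by (simp add: algebra_simps)
    then show "cnj (weyl1_int (- int p') (- int q) y z) * weyl1_int (- int p) (- int q) y z =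
        (if int d dvd (int y - (int z - int q)) then chi d (D * (half * int q + int y)) else 0)"
      by (simp add: weyl1_int_def algebra_simps)
  qed
  also have "\<dots> = chi d (D * (half * int q + int y0))"
    unfolding y0_def by (rule sum_if_dvd_diff[OF d_pos])
  also have "\<dots> = chi d (D * (half * int q - int q) + D * int z)"
    by (rule chi_cong[OF d_pos], rule dvd_linear_combination[OF y0 y0, of _ "- D" 0])
      (simp add: algebra_simps)
  finally show ?thesis unfolding D_def by (simp add: chi_add)
qed

lemma weyl1_int_orthogonality:
  assumes "p < d" "q < d" "p' < d" "q' < d"
  shows "(\<Sum>z<d. \<Sum>y<d. cnj (weyl1_int (- int p') (- int q') y z) * weyl1_int (- int p) (- int q) y z) =
         (if p = p' \<and> q = q' then of_nat d else 0)"
proof (cases "q = q'")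
  case False
  have "cnj (weyl1_int (- int p') (- int q') y z) * weyl1_int (- int p) (- int q) y z = 0" for y z
  proof -
    have "\<not> (int d dvd (int y - int z + int q') \<and> int d dvd (int y - int z + int q))"
    proof
      assume "int d dvd (int y - int z + int q') \<and> int d dvd (int y - int z + int q)"
      then have "int d dvd ((int y - int z + int q') - (int y - int z + int q))" by (metis dvd_diff)
      then show False using eq_if_dvd_diff[OF assms(4,2)] False by simp
    qed
    then show ?thesis unfolding weyl1_int_def by auto
  qed
  then show ?thesis using False by (simp only: sum.neutral_const) simp
next
  case True
  have "(\<Sum>z<d. \<Sum>y<d. cnj (weyl1_int (- int p') (- int q') y z) * weyl1_int (- int p) (- int q) y z) =
        chi d ((int p' - int p) * (half * int q - int q)) * (\<Sum>z<d. chi d ((int p' - int p) * int z))"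
    unfolding True[symmetric] sum_weyl1_int_column by (simp add: sum_distrib_left)
  also have "\<dots> = (if p = p' then of_nat d else 0)"
    unfolding sum_chi_multiples[OF d_pos] using eq_if_dvd_diff[OF assms(3,1)] by auto
  finally show ?thesis using True by simp
qed

definition scale :: "nat \<Rightarrow> nat \<Rightarrow> ket \<Rightarrow> ket" where
  "scale n m p = (\<lambda>l\<in>{..<n}. (m * p l) mod d)"

definition scale_pt :: "nat \<Rightarrow> nat \<Rightarrow> ket \<times> ket \<Rightarrow> ket \<times> ket" where
  "scale_pt n m x = (scale n m (fst x), scale n m (snd x))"

lemma scale_in_kets: "scale n m p \<in> kets d n"
  unfolding scale_def kets_def using d_pos by auto

lemma scale_pt_in_phase_space: "scale_pt n m x \<in> phase_space d n"
  unfolding scale_pt_def phase_space_def using scale_in_kets by auto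

lemma vneg_cong: "a \<le> d \<Longrightarrow> int d dvd (int ((d - a) mod d) - (- int a))"
proof -
  assume a: "a \<le> d"
  have e: "int ((d - a) mod d) = (int d - int a) mod int d" using a by (simp add: of_nat_mod of_nat_diff)
  have "int d dvd ((int d - int a) mod int d - (int d - int a))" by (rule dvd_mod_diff_self)
  hence "int d dvd (((int d - int a) mod int d - (int d - int a)) + int d)" by (rule dvd_add) simp
  thus ?thesis unfolding e by (simp add: algebra_simps)
qed

lemma weyl_neg_entry:
  assumes "j \<in> kets d n" "k \<in> kets d n" "x \<in> phase_space d n"
  shows "weyl_neg d n x j k = (\<Prod>l<n. weyl1_int (- int (fst x l)) (- int (snd x l)) (j l) (k l))"
proof -
  have "weyl_neg d n x j k = (\<Prod>l<n. weyl1 d (vneg d n (fst x) l) (vneg d n (snd x) l) (j l) (k l))"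
    using assms(1,2) unfolding weyl_neg_def weyl_def by (simp only: if_True simp_thms)
  also have "\<dots> = (\<Prod>l<n. weyl1_int (- int (fst x l)) (- int (snd x l)) (j l) (k l))"
  proof (intro prod.cong refl)
    fix l assume l: "l \<in> {..<n}"
    have f: "fst x l < d" "snd x l < d" using assms(3) l kets_less unfolding phase_space_def by auto
    have v: "vneg d n p l = (d - p l) mod d" for p using l unfolding vneg_def by simp
    have jk: "j l < d" "k l < d" using l kets_less[OF assms(1)] kets_less[OF assms(2)] by auto
    show "weyl1 d (vneg d n (fst x) l) (vneg d n (snd x) l) (j l) (k l) = weyl1_int (- int (fst x l)) (- int (snd x l)) (j l) (k l)"
      unfolding v by (rule weyl1_eq_weyl1_int[OF jk vneg_cong vneg_cong]) (use f in auto)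
  qed
  finally show ?thesis .
qed

lemma weyl_neg_scale_entry:
  assumes "j \<in> kets d n" "k \<in> kets d n"
  shows "weyl_neg d n (scale_pt n m x) j k = (\<Prod>l<n. weyl1_int (int m * (- int (fst x l))) (int m * (- int (snd x l))) (j l) (k l))"
proof -
  have "weyl_neg d n (scale_pt n m x) j k = (\<Prod>l<n. weyl1_int (- int (fst (scale_pt n m x) l)) (- int (snd (scale_pt n m x) l)) (j l) (k l))"
    by (rule weyl_neg_entry[OF assms scale_pt_in_phase_space])
  also have "\<dots> = (\<Prod>l<n. weyl1_int (int m * (- int (fst x l))) (int m * (- int (snd x l))) (j l) (k l))"
  proof (rule prod.cong[OF refl], rule weyl1_int_cong)
    fix l assume l: "l \<in> {..<n}"
    have md: "int d dvd (- int ((m * a) mod d) - int m * - int a)" for a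
    proof -
      have e: "int ((m * a) mod d) = (int m * int a) mod int d" by (simp add: of_nat_mod)
      have "int d dvd ((int m * int a) mod int d - int m * int a)"
        by (rule dvd_mod_diff_self)
      hence "int d dvd (- ((int m * int a) mod int d - int m * int a))" by (simp only: dvd_minus_iff)
      thus ?thesis unfolding e by (simp add: algebra_simps)
    qed
    have sm: "fst (scale_pt n m x) l = (m * fst x l) mod d" "snd (scale_pt n m x) l = (m * snd x l) mod d"
      using l unfolding scale_pt_def scale_def by auto
    show "int d dvd (- int (fst (scale_pt n m x) l) - int m * - int (fst x l))"
      unfolding sm by (rule md)
    show "int d dvd (- int (snd (scale_pt n m x) l) - int m * - int (snd x l))"
      unfolding sm by (rule md)
  qed
  finally show ?thesis .
qed

lemma weyl_neg_rows_orthonormal: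
  assumes "j \<in> kets d n" "j' \<in> kets d n" "x \<in> phase_space d n"
  shows "(\<Sum>c\<in>kets d n. weyl_neg d n x j c * cnj (weyl_neg d n x j' c)) = (if j = j' then 1 else 0)"
proof -
  have "(\<Sum>c\<in>kets d n. weyl_neg d n x j c * cnj (weyl_neg d n x j' c)) =
        (\<Sum>c\<in>kets d n. \<Prod>l<n. weyl1_int (- int (fst x l)) (- int (snd x l)) (j l) (c l) *
                                cnj (weyl1_int (- int (fst x l)) (- int (snd x l)) (j' l) (c l)))"
    by (intro sum.cong refl) (simp add: weyl_neg_entry assms prod.distrib)
  also have "\<dots> = (\<Prod>l<n. \<Sum>a<d. weyl1_int (- int (fst x l)) (- int (snd x l)) (j l) a *
                                cnj (weyl1_int (- int (fst x l)) (- int (snd x l)) (j' l) a))"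
    by (rule sum_kets_prod)
  also have "\<dots> = (\<Prod>l<n. if j l = j' l then 1 else 0)"
    by (intro prod.cong refl weyl1_int_rows_orthonormal) (use assms kets_less in auto)
  also have "\<dots> = (if j = j' then 1 else 0)"
    unfolding prod_indicator using kets_eq_iff[OF assms(1,2)] by simp
  finally show ?thesis .
qed

lemma weyl_neg_scale_mult:
  assumes "j \<in> kets d n" "b \<in> kets d n" and that: "x \<in> phase_space d n"
  shows "(\<Sum>c\<in>kets d n. weyl_neg d n (scale_pt n m x) j c * weyl_neg d n x c b) = weyl_neg d n (scale_pt n (Suc m) x) j b"
proof -
  have "(\<Sum>c\<in>kets d n. weyl_neg d n (scale_pt n m x) j c * weyl_neg d n x c b) =
        (\<Sum>c\<in>kets d n. \<Prod>l<n. weyl1_int (int m * (- int (fst x l))) (int m * (- int (snd x l))) (j l) (c l) *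
                                weyl1_int (- int (fst x l)) (- int (snd x l)) (c l) (b l))"
    by (intro sum.cong refl) (simp add: weyl_neg_entry weyl_neg_scale_entry assms that prod.distrib)
  also have "\<dots> = (\<Prod>l<n. \<Sum>a<d. weyl1_int (int m * (- int (fst x l))) (int m * (- int (snd x l))) (j l) a *
                                weyl1_int (- int (fst x l)) (- int (snd x l)) a (b l))"
    by (rule sum_kets_prod)
  also have "\<dots> = (\<Prod>l<n. weyl1_int ((int m + 1) * (- int (fst x l))) ((int m + 1) * (- int (snd x l))) (j l) (b l))"
    by (intro prod.cong refl weyl1_int_mult_multiple)
  also have "\<dots> = weyl_neg d n (scale_pt n (Suc m) x) j b"
    by (simp add: weyl_neg_scale_entry assms add.commute)
  finally show ?thesis .
qed

lemma weyl_neg_completeness: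
  assumes "k \<in> kets d n" "j \<in> kets d n" "k' \<in> kets d n" "j' \<in> kets d n"
  shows "(\<Sum>x\<in>phase_space d n. weyl_neg d n x k j * cnj (weyl_neg d n x k' j')) =
         (if k = k' \<and> j = j' then of_nat d ^ n else 0)"
proof -
  define F where "F l a b = weyl1_int (- int a) (- int b) (k l) (j l) * cnj (weyl1_int (- int a) (- int b) (k' l) (j' l))" for l a b
  have "(\<Sum>x\<in>phase_space d n. weyl_neg d n x k j * cnj (weyl_neg d n x k' j')) =
        (\<Sum>p\<in>kets d n. \<Sum>q\<in>kets d n. weyl_neg d n (p, q) k j * cnj (weyl_neg d n (p, q) k' j'))"
    unfolding phase_space_def by (simp add: sum.cartesian_product)
  also have "\<dots> = (\<Sum>p\<in>kets d n. \<Sum>q\<in>kets d n. \<Prod>l<n. F l (p l) (q l))"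
    by (intro sum.cong refl) (simp add: weyl_neg_entry assms phase_space_def prod.distrib F_def)
  also have "\<dots> = (\<Sum>p\<in>kets d n. \<Prod>l<n. \<Sum>b<d. F l (p l) b)"
    by (intro sum.cong refl sum_kets_prod)
  also have "\<dots> = (\<Prod>l<n. \<Sum>a<d. \<Sum>b<d. F l a b)"
    by (rule sum_kets_prod)
  also have "\<dots> = (\<Prod>l<n. if k l = k' l \<and> j l = j' l then of_nat d else 0)"
    unfolding F_def by (intro prod.cong refl weyl1_int_completeness) (use assms kets_less in auto)
  also have "\<dots> = (if k = k' \<and> j = j' then of_nat d ^ n else 0)"
    unfolding prod_indicator using kets_eq_iff[OF assms(1,3)] kets_eq_iff[OF assms(2,4)] by auto
  finally show ?thesis .
qed

lemma weyl_neg_orthogonality: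
  assumes "x \<in> phase_space d n" "y \<in> phase_space d n"
  shows "(\<Sum>j\<in>kets d n. \<Sum>k\<in>kets d n. cnj (weyl_neg d n y k j) * weyl_neg d n x k j) =
         (if x = y then of_nat d ^ n else 0)"
proof -
  define F where "F l a b = cnj (weyl1_int (- int (fst y l)) (- int (snd y l)) a b) * weyl1_int (- int (fst x l)) (- int (snd x l)) a b" for l a b
  have "(\<Sum>j\<in>kets d n. \<Sum>k\<in>kets d n. cnj (weyl_neg d n y k j) * weyl_neg d n x k j) =
        (\<Sum>j\<in>kets d n. \<Sum>k\<in>kets d n. \<Prod>l<n. F l (k l) (j l))"
    by (intro sum.cong refl) (simp add: weyl_neg_entry assms prod.distrib F_def)
  also have "\<dots> = (\<Sum>j\<in>kets d n. \<Prod>l<n. \<Sum>a<d. F l a (j l))"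
    by (intro sum.cong refl sum_kets_prod)
  also have "\<dots> = (\<Prod>l<n. \<Sum>b<d. \<Sum>a<d. F l a b)"
    by (rule sum_kets_prod)
  also have "\<dots> = (\<Prod>l<n. if fst x l = fst y l \<and> snd x l = snd y l then of_nat d else 0)"
    unfolding F_def by (intro prod.cong refl weyl1_int_orthogonality) (use assms kets_less in \<open>auto simp: phase_space_def\<close>)
  also have "\<dots> = (if x = y then of_nat d ^ n else 0)"
  proof -
    have "x = y \<longleftrightarrow> fst x = fst y \<and> snd x = snd y" by (simp add: prod_eq_iff)
    thus ?thesis
      unfolding prod_indicator using assms kets_eq_iff[of "fst x" d n "fst y"] kets_eq_iff[of "snd x" d n "snd y"]
      by (auto simp: phase_space_def)
  qed
  finally show ?thesis .
qed

section \<open>Parseval identity and the mean state\<close>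

lemma parseval_char_fun:
  "(\<Sum>x\<in>phase_space d n. (cmod (char_fun d n A x))\<^sup>2) = real d ^ n * hs_norm_sq d n A"
proof -
  let ?U = "kets d n \<times> kets d n"
  have "complex_of_real (\<Sum>x\<in>phase_space d n. (cmod (char_fun d n A x))\<^sup>2) =
        (\<Sum>x\<in>phase_space d n. char_fun d n A x * cnj (char_fun d n A x))"
    by (simp only: mult_cnj_norm_sq of_real_sum)
  also have "\<dots> = (\<Sum>x\<in>phase_space d n.
      (\<Sum>u\<in>?U. A (fst u) (snd u) * weyl_neg d n x (snd u) (fst u)) * cnj (\<Sum>u\<in>?U. A (fst u) (snd u) * weyl_neg d n x (snd u) (fst u)))"
    unfolding char_fun_expand_pairs ..
  also have "\<dots> = of_nat d ^ n * (\<Sum>u\<in>?U. A (fst u) (snd u) * cnj (A (fst u) (snd u)))"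
  proof (rule parseval_char_fun_orthogonal_kernel)
    fix u v assume "u \<in> ?U" "v \<in> ?U"
    thus "(\<Sum>x\<in>phase_space d n. weyl_neg d n x (snd u) (fst u) * cnj (weyl_neg d n x (snd v) (fst v))) = (if u = v then of_nat d ^ n else 0)"
      by (subst weyl_neg_completeness) (auto simp: prod_eq_iff)
  qed (simp add: finite_kets)
  also have "\<dots> = complex_of_real (real d ^ n * hs_norm_sq d n A)"
    unfolding hs_norm_sq_def sum_nested_eq_sum_product by (simp only: mult_cnj_norm_sq of_real_sum of_real_mult of_real_power of_real_of_nat_eq)
  finally show ?thesis by (simp only: of_real_eq_iff)
qed

lemma char_fun_inject:
  assumes "op_on d n A" "op_on d n B" "\<And>x. x \<in> phase_space d n \<Longrightarrow> char_fun d n A x = char_fun d n B x"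
  shows "A = B"
proof -
  have "(\<Sum>x\<in>phase_space d n. (cmod (char_fun d n (A - B) x))\<^sup>2) = 0"
    using assms(3) by (simp add: char_fun_diff)
  hence "real d ^ n * hs_norm_sq d n (A - B) = 0" by (simp only: parseval_char_fun)
  hence h0: "hs_norm_sq d n (A - B) = 0" using d_pos by simp
  show ?thesis
  proof (intro ext)
    fix k j
    show "A k j = B k j"
    proof (cases "k \<in> kets d n \<and> j \<in> kets d n")
      case True
      thus ?thesis using hs_norm_sq_eq_0_imp_entry[OF h0] by auto
    next
      case False
      thus ?thesis using assms(1,2) unfolding op_on_def by auto
    qed
  qed
qed

lemma exists_op_char_fun:
  "\<exists>\<sigma>. op_on d n \<sigma> \<and> (\<forall>x\<in>phase_space d n. char_fun d n \<sigma> x = f x)"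
proof -
  let ?U = "kets d n \<times> kets d n"
  define a where "a u = (\<Sum>y\<in>phase_space d n. f y * cnj (weyl_neg d n y (snd u) (fst u))) / of_nat d ^ n" for u
  define \<sigma> where "\<sigma> k j = (if k \<in> kets d n \<and> j \<in> kets d n then a (k, j) else 0)" for k j
  have "op_on d n \<sigma>" unfolding op_on_def \<sigma>_def by auto
  moreover have "char_fun d n \<sigma> x = f x" if x: "x \<in> phase_space d n" for x
  proof -
    have "char_fun d n \<sigma> x = (\<Sum>u\<in>?U. a u * weyl_neg d n x (snd u) (fst u))"
      unfolding char_fun_expand_pairs by (intro sum.cong refl) (auto simp: \<sigma>_def)
    also have "\<dots> = f x" unfolding a_def
    proof (rule inversion_orthogonal_kernel[OF _ finite_phase_space _ x])
      fix x y assume xy: "x \<in> phase_space d n" "y \<in> phase_space d n"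
      show "(\<Sum>u\<in>?U. cnj (weyl_neg d n y (snd u) (fst u)) * weyl_neg d n x (snd u) (fst u)) = (if x = y then of_nat d ^ n else 0)"
        using weyl_neg_orthogonality[OF xy] by (simp only: sum_nested_eq_sum_product)
    qed (use d_pos in simp)
    finally show ?thesis .
  qed
  ultimately show ?thesis by blast
qed

definition mean_char :: "nat \<Rightarrow> op \<Rightarrow> ket \<times> ket \<Rightarrow> complex" where
  "mean_char n \<rho> x = (if cmod (char_fun d n \<rho> x) = 1 then char_fun d n \<rho> x else 0)"

lemma mean_state_char_fun:
  "op_on d n (mean_state d n \<rho>) \<and> (\<forall>x\<in>phase_space d n. char_fun d n (mean_state d n \<rho>) x = mean_char n \<rho> x)"
proof -
  have "\<exists>!\<sigma>. op_on d n \<sigma> \<and> (\<forall>x\<in>phase_space d n. char_fun d n \<sigma> x = mean_char n \<rho> x)"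
    using exists_op_char_fun[of n "mean_char n \<rho>"] char_fun_inject by metis
  from theI'[OF this] show ?thesis unfolding mean_state_def mean_char_def .
qed

lemma norm_char_fun_le_1:
  assumes st: "is_state d n \<rho>" and x: "x \<in> phase_space d n"
  shows "cmod (char_fun d n \<rho> x) \<le> 1"
proof (cases "char_fun d n \<rho> x = 0")
  case True thus ?thesis by simp
next
  case False
  define X where "X = char_fun d n \<rho> x"
  define \<omega> where "\<omega> = cnj X / complex_of_real (cmod X)"
  have Xn: "cmod X \<noteq> 0" using False unfolding X_def by simp
  have oo: "\<omega> * cnj \<omega> = 1"
  proof -
    have "\<omega> * cnj \<omega> = (cnj X * X) / (complex_of_real (cmod X) * complex_of_real (cmod X))"
      unfolding \<omega>_def by simp
    also have "\<dots> = 1" using Xn by (simp add: mult_cnj_norm_sq power2_eq_square)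
    finally show ?thesis .
  qed
  have rowU: "(\<Sum>c\<in>kets d n. \<omega> * weyl_neg d n x j c * cnj (\<omega> * weyl_neg d n x j' c)) = (if j = j' then 1 else 0)"
    if "j \<in> kets d n" "j' \<in> kets d n" for j j'
  proof -
    have "(\<Sum>c\<in>kets d n. \<omega> * weyl_neg d n x j c * cnj (\<omega> * weyl_neg d n x j' c)) =
          (\<omega> * cnj \<omega>) * (\<Sum>c\<in>kets d n. weyl_neg d n x j c * cnj (weyl_neg d n x j' c))"
      by (simp add: sum_distrib_left mult_ac)
    thus ?thesis using oo weyl_neg_rows_orthonormal[OF that x] by simp
  qed
  have "Re (\<Sum>k\<in>kets d n. \<Sum>j\<in>kets d n. \<rho> k j * (\<omega> * weyl_neg d n x j k)) \<le> 1"
    using state_trace_unitary_le_1[OF st rowU] .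
  also have "(\<Sum>k\<in>kets d n. \<Sum>j\<in>kets d n. \<rho> k j * (\<omega> * weyl_neg d n x j k)) = \<omega> * X"
    unfolding X_def char_fun_expand by (simp add: sum_distrib_left mult_ac)
  also have "\<omega> * X = complex_of_real (cmod X)"
  proof -
    have "\<omega> * X = (cnj X * X) / complex_of_real (cmod X)" unfolding \<omega>_def by simp
    also have "\<dots> = complex_of_real (cmod X)" using Xn by (simp add: mult_cnj_norm_sq power2_eq_square)
    finally show ?thesis .
  qed
  finally show ?thesis unfolding X_def by simp
qed

lemma weyl_neg_scale_0:
  assumes "j \<in> kets d n" "b \<in> kets d n"
  shows "weyl_neg d n (scale_pt n 0 x) j b = (if j = b then 1 else 0)"
proof -
  have "weyl_neg d n (scale_pt n 0 x) j b = (\<Prod>l<n. weyl1_int 0 0 (j l) (b l))"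
    using weyl_neg_scale_entry[OF assms, of 0 x] by simp
  also have "\<dots> = (\<Prod>l<n. if j l = b l then 1 else 0)"
  proof (intro prod.cong refl)
    fix l assume "l \<in> {..<n}"
    hence jb: "j l < d" "b l < d" using assms kets_less by auto
    show "weyl1_int 0 0 (j l) (b l) = (if j l = b l then 1 else 0)"
      unfolding weyl1_int_def using eq_if_dvd_diff[OF jb] by auto
  qed
  also have "\<dots> = (if j = b then 1 else 0)"
    unfolding prod_indicator using kets_eq_iff[OF assms] by simp
  finally show ?thesis .
qed

text \<open>\<open>\<Xi>\<^sub>\<rho>(x) = 1\<close> gives \<open>\<rho> w(-x) = \<rho>\<close>, and \<open>w(-m x) = w(-x)\<^sup>m\<close>.\<close>

lemma char_fun_scale_eq_1:
  assumes st: "is_state d n \<rho>" and x: "x \<in> phase_space d n" and X1: "char_fun d n \<rho> x = 1"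
  shows "char_fun d n \<rho> (scale_pt n m x) = 1"
proof -
  have trace1: "(\<Sum>k\<in>kets d n. \<Sum>j\<in>kets d n. \<rho> k j * weyl_neg d n x j k) = 1"
    using X1 by (simp add: char_fun_expand)
  have fix1: "(\<Sum>j\<in>kets d n. \<rho> a j * weyl_neg d n x j b) = \<rho> a b"
    if "a \<in> kets d n" "b \<in> kets d n" for a b
    by (rule state_trace_unitary_eq_1_imp[OF st _ trace1 that]) (rule weyl_neg_rows_orthonormal[OF _ _ x])
  have P: "\<forall>a\<in>kets d n. \<forall>b\<in>kets d n. (\<Sum>j\<in>kets d n. \<rho> a j * weyl_neg d n (scale_pt n m x) j b) = \<rho> a b"
  proof (induction m)
    case 0
    show ?case using finite_kets by (auto simp: weyl_neg_scale_0 sum_mult_indicator)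
  next
    case (Suc m)
    show ?case
    proof (intro ballI)
      fix a b assume ab: "a \<in> kets d n" "b \<in> kets d n"
      have "(\<Sum>j\<in>kets d n. \<rho> a j * weyl_neg d n (scale_pt n (Suc m) x) j b) =
            (\<Sum>j\<in>kets d n. \<Sum>c\<in>kets d n. \<rho> a j * (weyl_neg d n (scale_pt n m x) j c * weyl_neg d n x c b))"
        by (intro sum.cong refl) (simp add: weyl_neg_scale_mult[OF _ ab(2) x, symmetric] sum_distrib_left)
      also have "\<dots> = (\<Sum>c\<in>kets d n. \<Sum>j\<in>kets d n. \<rho> a j * (weyl_neg d n (scale_pt n m x) j c * weyl_neg d n x c b))"
        by (rule sum.swap)
      also have "\<dots> = (\<Sum>c\<in>kets d n. (\<Sum>j\<in>kets d n. \<rho> a j * weyl_neg d n (scale_pt n m x) j c) * weyl_neg d n x c b)"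
        by (simp add: sum_distrib_right mult.assoc)
      also have "\<dots> = (\<Sum>c\<in>kets d n. \<rho> a c * weyl_neg d n x c b)"
        using Suc.IH ab by (intro sum.cong refl) auto
      also have "\<dots> = \<rho> a b" by (rule fix1[OF ab])
      finally show "(\<Sum>j\<in>kets d n. \<rho> a j * weyl_neg d n (scale_pt n (Suc m) x) j b) = \<rho> a b" .
    qed
  qed
  have "char_fun d n \<rho> (scale_pt n m x) = (\<Sum>k\<in>kets d n. \<rho> k k)"
    unfolding char_fun_expand using P by (intro sum.cong refl) auto
  thus ?thesis using is_stateD(4)[OF st] by simp
qed

lemma exists_inverse_mod:
  assumes "\<not> int d dvd s"
  shows "\<exists>m'::nat. int d dvd (int m' * int (nat (s mod int d)) - 1)"
proof -
  have "prime (int d)" using prime_d by simp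
  hence "coprime (int d) s" using assms by (rule prime_imp_coprime)
  hence "coprime s (int d)" by (simp add: coprime_commute)
  then obtain x where x: "[s * x = 1] (mod int d)" using cong_solve_coprime_int by blast
  have "[int (nat (x mod int d)) * int (nat (s mod int d)) = x * s] (mod int d)"
    using d_pos by (intro cong_mult) (simp_all add: cong_def)
  also have "[x * s = 1] (mod int d)" using x by (simp add: mult.commute)
  finally show ?thesis unfolding cong_iff_dvd_diff by blast
qed

lemma scale_inverse:
  assumes m: "int d dvd (int m' * int m - 1)" and p: "p \<in> kets d n"
  shows "scale n m' (scale n m p) = p"
proof -
  have mm: "(m' * m) mod d = 1"
  proof -
    have "[int (m' * m) = int 1] (mod int d)" using m unfolding cong_iff_dvd_diff by simp
    hence "[m' * m = 1] (mod d)" by (simp only: cong_int_iff)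
    thus ?thesis using d_gt1 unfolding cong_def by simp
  qed
  have "\<forall>l<n. scale n m' (scale n m p) l = p l"
  proof (intro allI impI)
    fix l assume l: "l < n"
    have "scale n m' (scale n m p) l = (m' * ((m * p l) mod d)) mod d" using l unfolding scale_def by simp
    also have "\<dots> = ((m' * m) * p l) mod d" by (simp add: mod_mult_right_eq mult.assoc)
    also have "\<dots> = (((m' * m) mod d) * p l) mod d" by (simp add: mod_mult_left_eq)
    also have "\<dots> = p l" using mm kets_less[OF p l] by simp
    finally show "scale n m' (scale n m p) l = p l" .
  qed
  thus ?thesis using kets_eq_iff[OF scale_in_kets p] by blast
qed

lemma scale_pt_inverse:
  assumes "int d dvd (int m' * int m - 1)" "x \<in> phase_space d n"
  shows "scale_pt n m' (scale_pt n m x) = x"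
  using assms scale_inverse[OF assms(1)] unfolding scale_pt_def phase_space_def by (auto simp: prod_eq_iff)

section \<open>The beam splitter\<close>

lemma vlin_in_kets: "vlin d n a i b j \<in> kets d n"
  unfolding vlin_def kets_def using d_pos by (auto simp: nat_less_iff)

lemma int_vlin: "l < n \<Longrightarrow> int (vlin d n a i b j l) = (a * int (i l) + b * int (j l)) mod int d"
  unfolding vlin_def using d_pos by simp

lemma beam_weyl1_int:
  assumes N: "int d dvd (s^2 + t^2 - 1)"
    and al: "int \<alpha> = (s * int i + t * int j) mod int d"
    and al': "int \<alpha>' = (s * int i' + t * int j') mod int d"
    and be: "int \<beta> = (t * int i + (- s) * int j) mod int d"
    and be': "int \<beta>' = (t * int i' + (- s) * int j') mod int d"
    and lt: "\<beta> < d" "\<beta>' < d"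
  shows "(if \<beta> = \<beta>' then 1 else 0) * weyl1_int P Q \<alpha>' \<alpha>
           = weyl1_int (s * P) (s * Q) i' i * weyl1_int (t * P) (t * Q) j' j"
proof -
  define u where "u = int i' - int i"
  define v where "v = int j' - int j"
  define ea where "ea = int \<alpha> - (s * int i + t * int j)"
  define ea' where "ea' = int \<alpha>' - (s * int i' + t * int j')"
  define eb where "eb = int \<beta> - (t * int i + (- s) * int j)"
  define eb' where "eb' = int \<beta>' - (t * int i' + (- s) * int j')"
  have "int d dvd ea" "int d dvd ea'" "int d dvd eb" "int d dvd eb'"
    unfolding ea_def ea'_def eb_def eb'_def al al' be be' by (rule dvd_mod_diff_self)+
  then have "int d dvd (eb - eb')" "int d dvd (ea' - ea)" by simp_all
  have "\<beta> = \<beta>' \<longleftrightarrow> int d dvd (int \<beta> - int \<beta>')" using eq_if_dvd_diff[OF lt] by auto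
  also have "int \<beta> - int \<beta>' = (eb - eb') + - (t * u - s * v)"
    unfolding u_def v_def eb_def eb'_def by (simp add: algebra_simps)
  finally have supp_\<beta>: "\<beta> = \<beta>' \<longleftrightarrow> int d dvd (t * u - s * v)"
    using dvd_add_right_iff[OF \<open>int d dvd (eb - eb')\<close>] by (simp add: dvd_diff_commute)
  have "int \<alpha>' - int \<alpha> - Q = (ea' - ea) + (s * u + t * v - Q)"
    unfolding u_def v_def ea_def ea'_def by (simp add: algebra_simps)
  then have supp_\<alpha>: "int d dvd (int \<alpha>' - int \<alpha> - Q) \<longleftrightarrow> int d dvd (s * u + t * v - Q)"
    using dvd_add_right_iff[OF \<open>int d dvd (ea' - ea)\<close>] by (simp only:)
  have "(- half * (s * P) * (s * Q) + s * P * int i' + (- half * (t * P) * (t * Q) + t * P * int j'))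
          - (- half * P * Q + P * int \<alpha>') = - (half * P * Q) * (s^2 + t^2 - 1) - P * ea'"
    unfolding ea'_def by (simp add: algebra_simps power2_eq_square)
  also have "int d dvd \<dots>" using N \<open>int d dvd ea'\<close> by simp
  finally have phase: "chi d (- half * P * Q + P * int \<alpha>') =
      chi d (- half * (s * P) * (s * Q) + s * P * int i') * chi d (- half * (t * P) * (t * Q) + t * P * int j')"
    by (simp add: chi_add[symmetric] chi_cong[OF d_pos])
  show ?thesis
    using rotation_dvd_iff[OF N, of u v Q] supp_\<alpha> supp_\<beta> phase
    unfolding weyl1_int_def u_def v_def by (auto simp: diff_diff_eq)
qed

lemma int_nat_mod: "int (nat (s mod int d)) = s mod int d"
  using d_pos by simp

lemma beam_weyl_neg:
  assumes N: "int d dvd (s^2 + t^2 - 1)" and x: "x \<in> phase_space d n"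
    and K: "i \<in> kets d n" "j \<in> kets d n" "i' \<in> kets d n" "j' \<in> kets d n"
  shows "(if vlin d n t i (-s) j = vlin d n t i' (-s) j' then 1 else 0) * weyl_neg d n x (vlin d n s i' t j') (vlin d n s i t j)
       = weyl_neg d n (scale_pt n (nat (s mod int d)) x) i' i * weyl_neg d n (scale_pt n (nat (t mod int d)) x) j' j"
proof -
  have eqB: "vlin d n t i (-s) j = vlin d n t i' (-s) j' \<longleftrightarrow> (\<forall>l<n. vlin d n t i (-s) j l = vlin d n t i' (-s) j' l)"
    by (rule kets_eq_iff[OF vlin_in_kets vlin_in_kets])
  have "(if vlin d n t i (-s) j = vlin d n t i' (-s) j' then 1 else 0) =
        (\<Prod>l<n. if vlin d n t i (-s) j l = vlin d n t i' (-s) j' l then 1 else (0::complex))"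
    unfolding prod_indicator eqB by simp
  hence "(if vlin d n t i (-s) j = vlin d n t i' (-s) j' then 1 else 0) * weyl_neg d n x (vlin d n s i' t j') (vlin d n s i t j) =
         (\<Prod>l<n. (if vlin d n t i (-s) j l = vlin d n t i' (-s) j' l then 1 else 0) *
             weyl1_int (- int (fst x l)) (- int (snd x l)) (vlin d n s i' t j' l) (vlin d n s i t j l))"
    by (simp add: weyl_neg_entry[OF vlin_in_kets vlin_in_kets x] prod.distrib)
  also have "\<dots> = (\<Prod>l<n. weyl1_int (s * (- int (fst x l))) (s * (- int (snd x l))) (i' l) (i l) *
                             weyl1_int (t * (- int (fst x l))) (t * (- int (snd x l))) (j' l) (j l))"
  proof (rule prod.cong[OF refl])
    fix l assume l: "l \<in> {..<n}"
    show "(if vlin d n t i (-s) j l = vlin d n t i' (-s) j' l then 1 else 0) *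
             weyl1_int (- int (fst x l)) (- int (snd x l)) (vlin d n s i' t j' l) (vlin d n s i t j l) =
          weyl1_int (s * (- int (fst x l))) (s * (- int (snd x l))) (i' l) (i l) *
             weyl1_int (t * (- int (fst x l))) (t * (- int (snd x l))) (j' l) (j l)"
      by (rule beam_weyl1_int[OF N]) (use l int_vlin kets_less[OF vlin_in_kets] in auto)
  qed
  also have "\<dots> = weyl_neg d n (scale_pt n (nat (s mod int d)) x) i' i * weyl_neg d n (scale_pt n (nat (t mod int d)) x) j' j"
  proof -
    have c: "int d dvd (int (nat (r mod int d)) * - int a - r * - int a)" for r a
    proof -
      have "int (nat (r mod int d)) * - int a - r * - int a = (- int a) * (r mod int d - r)"
        unfolding int_nat_mod by (simp add: algebra_simps)
      thus ?thesis using dvd_mod_diff_self[of "int d" r] by simp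
    qed
    have "weyl_neg d n (scale_pt n (nat (s mod int d)) x) i' i * weyl_neg d n (scale_pt n (nat (t mod int d)) x) j' j =
          (\<Prod>l<n. weyl1_int (s * (- int (fst x l))) (s * (- int (snd x l))) (i' l) (i l)) *
          (\<Prod>l<n. weyl1_int (t * (- int (fst x l))) (t * (- int (snd x l))) (j' l) (j l))"
      unfolding weyl_neg_scale_entry[OF K(3,1)] weyl_neg_scale_entry[OF K(4,2)]
      by (intro arg_cong2[where f = "(*)"] prod.cong refl weyl1_int_cong c)
    thus ?thesis by (simp add: prod.distrib)
  qed
  finally show ?thesis .
qed

lemma char_fun_beam_conv_pairs:
  "char_fun d n (beam_conv d n s t \<rho> \<sigma>) x =
   (\<Sum>u\<in>kets d n \<times> kets d n. \<Sum>v\<in>kets d n \<times> kets d n. \<rho> (fst u) (fst v) * \<sigma> (snd u) (snd v) *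
      ((if vlin d n t (fst u) (-s) (snd u) = vlin d n t (fst v) (-s) (snd v) then 1 else 0)
       * weyl_neg d n x (vlin d n s (fst v) t (snd v)) (vlin d n s (fst u) t (snd u))))"
proof -
  let ?K = "kets d n"
  let ?P = "kets d n \<times> kets d n"
  define A where "A u = vlin d n s (fst u) t (snd u)" for u :: "ket \<times> ket"
  define B where "B u = vlin d n t (fst u) (-s) (snd u)" for u :: "ket \<times> ket"
  define R where "R u v = \<rho> (fst u) (fst v) * \<sigma> (snd u) (snd v)" for u v :: "ket \<times> ket"
  define T where "T a a' b u v = beam_U d n s t (a, b) u * R u v * cnj (beam_U d n s t (a', b) v)
                                   * weyl_neg d n x a' a" for a a' b u v
  have AK: "A u \<in> ?K" "B u \<in> ?K" for u unfolding A_def B_def by (rule vlin_in_kets)+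
  have U: "beam_U d n s t (a, b) u = (if a = A u \<and> b = B u then 1 else 0)" for a b u
    unfolding beam_U_def A_def B_def by simp
  have "char_fun d n (beam_conv d n s t \<rho> \<sigma>) x = (\<Sum>a\<in>?K. \<Sum>a'\<in>?K. \<Sum>b\<in>?K. \<Sum>u\<in>?P. \<Sum>v\<in>?P. T a a' b u v)"
    unfolding char_fun_expand T_def R_def by (intro sum.cong refl) (simp add: beam_conv_def sum_distrib_right)
  also have "\<dots> = (\<Sum>a\<in>?K. \<Sum>a'\<in>?K. \<Sum>u\<in>?P. \<Sum>v\<in>?P. \<Sum>b\<in>?K. T a a' b u v)"
    by (intro sum.cong refl sum_swap_nested)
  also have "\<dots> = (\<Sum>a\<in>?K. \<Sum>u\<in>?P. \<Sum>v\<in>?P. \<Sum>a'\<in>?K. \<Sum>b\<in>?K. T a a' b u v)"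
    by (intro sum.cong refl sum_swap_nested)
  also have "\<dots> = (\<Sum>u\<in>?P. \<Sum>v\<in>?P. \<Sum>a\<in>?K. \<Sum>a'\<in>?K. \<Sum>b\<in>?K. T a a' b u v)"
    by (rule sum_swap_nested)
  also have "\<dots> = (\<Sum>u\<in>?P. \<Sum>v\<in>?P. R u v * ((if B u = B v then 1 else 0) * weyl_neg d n x (A v) (A u)))"
  proof (intro sum.cong refl)
    fix u v
    have "T a a' b u v = (if a = A u then (if a' = A v then (if b = B u then
              (if B u = B v then R u v * weyl_neg d n x (A v) (A u) else 0) else 0) else 0) else 0)" for a a' b
      unfolding T_def U by auto
    then show "(\<Sum>a\<in>?K. \<Sum>a'\<in>?K. \<Sum>b\<in>?K. T a a' b u v)
                 = R u v * ((if B u = B v then 1 else 0) * weyl_neg d n x (A v) (A u))"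
      using AK finite_kets by (simp add: sum_if_const)
  qed
  finally show ?thesis unfolding A_def B_def R_def .
qed

lemma char_fun_beam_conv:
  assumes N: "int d dvd (s^2 + t^2 - 1)" and x: "x \<in> phase_space d n"
  shows "char_fun d n (beam_conv d n s t \<rho> \<sigma>) x =
         char_fun d n \<rho> (scale_pt n (nat (s mod int d)) x) * char_fun d n \<sigma> (scale_pt n (nat (t mod int d)) x)"
proof -
  let ?K = "kets d n"
  define Ws where "Ws = weyl_neg d n (scale_pt n (nat (s mod int d)) x)"
  define Wt where "Wt = weyl_neg d n (scale_pt n (nat (t mod int d)) x)"
  have "char_fun d n (beam_conv d n s t \<rho> \<sigma>) x =
        (\<Sum>u\<in>?K \<times> ?K. \<Sum>v\<in>?K \<times> ?K. (\<rho> (fst u) (fst v) * Ws (fst v) (fst u)) * (\<sigma> (snd u) (snd v) * Wt (snd v) (snd u)))"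
    unfolding char_fun_beam_conv_pairs
  proof (intro sum.cong refl)
    fix u v assume "u \<in> ?K \<times> ?K" "v \<in> ?K \<times> ?K"
    then have "(if vlin d n t (fst u) (-s) (snd u) = vlin d n t (fst v) (-s) (snd v) then 1 else 0)
                 * weyl_neg d n x (vlin d n s (fst v) t (snd v)) (vlin d n s (fst u) t (snd u))
               = Ws (fst v) (fst u) * Wt (snd v) (snd u)"
      unfolding Ws_def Wt_def by (intro beam_weyl_neg[OF N x]) auto
    then show "\<rho> (fst u) (fst v) * \<sigma> (snd u) (snd v) *
        ((if vlin d n t (fst u) (-s) (snd u) = vlin d n t (fst v) (-s) (snd v) then 1 else 0)
         * weyl_neg d n x (vlin d n s (fst v) t (snd v)) (vlin d n s (fst u) t (snd u)))
        = (\<rho> (fst u) (fst v) * Ws (fst v) (fst u)) * (\<sigma> (snd u) (snd v) * Wt (snd v) (snd u))"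
      by (simp add: mult_ac)
  qed
  also have "\<dots> = (\<Sum>i\<in>?K. \<Sum>j\<in>?K. \<Sum>i'\<in>?K. \<Sum>j'\<in>?K. (\<rho> i i' * Ws i' i) * (\<sigma> j j' * Wt j' j))"
    by (simp only: sum.cartesian_product' fst_conv snd_conv)
  also have "\<dots> = (\<Sum>i\<in>?K. \<Sum>i'\<in>?K. \<Sum>j\<in>?K. \<Sum>j'\<in>?K. (\<rho> i i' * Ws i' i) * (\<sigma> j j' * Wt j' j))"
    by (rule sum.cong[OF refl], rule sum.swap)
  also have "\<dots> = (\<Sum>i\<in>?K. \<Sum>i'\<in>?K. (\<rho> i i' * Ws i' i) * (\<Sum>j\<in>?K. \<Sum>j'\<in>?K. \<sigma> j j' * Wt j' j))"
    by (simp only: sum_distrib_left)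
  also have "\<dots> = (\<Sum>i\<in>?K. \<Sum>i'\<in>?K. \<rho> i i' * Ws i' i) * (\<Sum>j\<in>?K. \<Sum>j'\<in>?K. \<sigma> j j' * Wt j' j)"
    by (simp only: sum_distrib_right)
  finally show ?thesis unfolding char_fun_expand Ws_def Wt_def .
qed

end

section \<open>Convergence to the mean state\<close>

locale beam_splitter_iteration = odd_prime_qudit +
  fixes n :: nat and s t :: int and \<rho> :: op
  assumes s_unit: "\<not> int d dvd s" and t_unit: "\<not> int d dvd t"
    and unit_circle: "[s^2 + t^2 = 1] (mod int d)"
    and state: "is_state d n \<rho>" and zero_mean: "zero_mean d n \<rho>"
begin

definition stabilizer :: "(ket \<times> ket) set" where
  "stabilizer = {x \<in> phase_space d n. char_fun d n \<rho> x = 1}"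

lemma char_fun_beam_pow_Suc:
  assumes "x \<in> phase_space d n"
  shows "char_fun d n (beam_pow d n s t (Suc k) \<rho>) x =
         char_fun d n (beam_pow d n s t k \<rho>) (scale_pt n (nat (s mod int d)) x)
         * char_fun d n \<rho> (scale_pt n (nat (t mod int d)) x)"
  using char_fun_beam_conv[OF _ assms] unit_circle by (simp add: cong_iff_dvd_diff)

lemma scale_pt_stabilizer: "x \<in> stabilizer \<Longrightarrow> scale_pt n m x \<in> stabilizer"
  using char_fun_scale_eq_1[OF state] scale_pt_in_phase_space unfolding stabilizer_def by auto

lemma scale_pt_stabilizer_cancel:
  assumes "int d dvd (int m' * int m - 1)" "x \<in> phase_space d n" "scale_pt n m x \<in> stabilizer"
  shows "x \<in> stabilizer"
  using scale_pt_stabilizer[OF assms(3), of m'] scale_pt_inverse[OF assms(1,2)] by simp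

lemma bij_betw_scale_pt_off_stabilizer:
  assumes "\<not> int d dvd r"
  shows "bij_betw (scale_pt n (nat (r mod int d)))
           (phase_space d n - stabilizer) (phase_space d n - stabilizer)"
proof -
  obtain r' where r': "int d dvd (int r' * int (nat (r mod int d)) - 1)"
    using exists_inverse_mod[OF assms] by blast
  then have r'': "int d dvd (int (nat (r mod int d)) * int r' - 1)"
    by (simp add: mult.commute)
  show ?thesis
  proof (rule bij_betwI[where g = "scale_pt n r'"])
    show "scale_pt n (nat (r mod int d)) \<in> phase_space d n - stabilizer \<rightarrow> phase_space d n - stabilizer"
      using scale_pt_in_phase_space scale_pt_stabilizer_cancel[OF r'] by blast
    show "scale_pt n r' \<in> phase_space d n - stabilizer \<rightarrow> phase_space d n - stabilizer"
      using scale_pt_in_phase_space scale_pt_stabilizer_cancel[OF r''] by blast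
  qed (use scale_pt_inverse[OF r'] scale_pt_inverse[OF r''] in auto)
qed

lemma char_fun_beam_pow_stabilizer:
  "x \<in> stabilizer \<Longrightarrow> char_fun d n (beam_pow d n s t k \<rho>) x = 1"
proof (induction k arbitrary: x)
  case 0
  then show ?case unfolding stabilizer_def by simp
next
  case (Suc k)
  then have "x \<in> phase_space d n" "scale_pt n (nat (t mod int d)) x \<in> stabilizer"
    using scale_pt_stabilizer unfolding stabilizer_def by auto
  then show ?case
    using Suc scale_pt_stabilizer char_fun_beam_pow_Suc unfolding stabilizer_def by simp
qed

lemma norm_char_fun_eq_1_iff:
  assumes x: "x \<in> phase_space d n"
  shows "cmod (char_fun d n \<rho> x) = 1 \<longleftrightarrow> x \<in> stabilizer"
proof
  assume c: "cmod (char_fun d n \<rho> x) = 1"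
  have "char_fun d n (mean_state d n \<rho>) x \<in> {0, 1}"
    using zero_mean x unfolding zero_mean_def by blast
  moreover have "char_fun d n (mean_state d n \<rho>) x = char_fun d n \<rho> x"
    using mean_state_char_fun x c unfolding mean_char_def by simp
  moreover have "char_fun d n \<rho> x \<noteq> 0" using c by auto
  ultimately show "x \<in> stabilizer" unfolding stabilizer_def using x by auto
qed (auto simp: stabilizer_def)

lemma char_fun_mean_state:
  assumes "x \<in> phase_space d n"
  shows "char_fun d n (mean_state d n \<rho>) x = (if x \<in> stabilizer then 1 else 0)"
  using mean_state_char_fun assms norm_char_fun_eq_1_iff[OF assms]
  unfolding mean_char_def stabilizer_def by auto

definition gap_values :: "real set" where
  "gap_values = {cmod (char_fun d n \<rho> x) | x. x \<in> phase_space d n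
                   \<and> char_fun d n \<rho> x \<noteq> 0 \<and> cmod (char_fun d n \<rho> x) \<noteq> 1}"

lemma magic_gap_eq: "magic_gap d n \<rho> = (if gap_values = {} then 0 else 1 - Max gap_values)"
  unfolding magic_gap_def gap_values_def Let_def ..

lemma finite_gap_values: "finite gap_values"
proof -
  have "gap_values \<subseteq> (\<lambda>x. cmod (char_fun d n \<rho> x)) ` phase_space d n"
    unfolding gap_values_def by auto
  then show ?thesis using finite_phase_space finite_subset by blast
qed

lemma magic_gap_le_1: "magic_gap d n \<rho> \<le> 1"
proof (cases "gap_values = {}")
  case False
  then obtain y where y: "y \<in> gap_values" by auto
  then have "y \<le> Max gap_values" using finite_gap_values by (intro Max_ge)
  moreover have "0 \<le> y" using y unfolding gap_values_def by auto
  ultimately have "0 \<le> Max gap_values" by linarith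
  then show ?thesis unfolding magic_gap_eq by simp
qed (simp add: magic_gap_eq)

lemma norm_char_fun_off_stabilizer:
  assumes x: "x \<in> phase_space d n - stabilizer"
  shows "cmod (char_fun d n \<rho> x) \<le> 1 - magic_gap d n \<rho>"
proof (cases "char_fun d n \<rho> x = 0")
  case True
  then show ?thesis using magic_gap_le_1 by simp
next
  case False
  then have "cmod (char_fun d n \<rho> x) \<in> gap_values"
    using x norm_char_fun_eq_1_iff unfolding gap_values_def by blast
  then show ?thesis using finite_gap_values by (auto simp: magic_gap_eq)
qed

lemma magic_gap_pos:
  assumes "\<rho> \<noteq> mean_state d n \<rho>"
  shows "magic_gap d n \<rho> > 0"
proof (cases "gap_values = {}")
  case True
  have "\<rho> = mean_state d n \<rho>"
  proof (rule char_fun_inject)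
    show "op_on d n \<rho>" by (rule is_stateD(1)[OF state])
    show "op_on d n (mean_state d n \<rho>)" using mean_state_char_fun by blast
    fix x assume x: "x \<in> phase_space d n"
    have "cmod (char_fun d n \<rho> x) \<noteq> 1 \<Longrightarrow> char_fun d n \<rho> x = 0"
      using True x unfolding gap_values_def by blast
    then show "char_fun d n \<rho> x = char_fun d n (mean_state d n \<rho>) x"
      using mean_state_char_fun x unfolding mean_char_def by auto
  qed
  then show ?thesis using assms by simp
next
  case False
  then have "Max gap_values \<in> gap_values" using finite_gap_values by (intro Max_in)
  then obtain x where x: "x \<in> phase_space d n" "Max gap_values = cmod (char_fun d n \<rho> x)"
    "cmod (char_fun d n \<rho> x) \<noteq> 1"
    unfolding gap_values_def by auto
  moreover have "cmod (char_fun d n \<rho> x) \<le> 1" by (rule norm_char_fun_le_1[OF state x(1)])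
  ultimately have "Max gap_values < 1" by linarith
  then show ?thesis using False by (simp add: magic_gap_eq)
qed

definition off_energy :: "op \<Rightarrow> real" where
  "off_energy A = (\<Sum>x\<in>phase_space d n - stabilizer. (cmod (char_fun d n A x))\<^sup>2)"

lemma off_energy_beam_pow_Suc:
  "off_energy (beam_pow d n s t (Suc k) \<rho>)
     \<le> (1 - magic_gap d n \<rho>)\<^sup>2 * off_energy (beam_pow d n s t k \<rho>)"
proof -
  let ?C = "phase_space d n - stabilizer"
  let ?X = "char_fun d n (beam_pow d n s t k \<rho>)"
  let ?scale = "\<lambda>r. scale_pt n (nat (r mod int d))"
  have "off_energy (beam_pow d n s t (Suc k) \<rho>)
          = (\<Sum>x\<in>?C. (cmod (?X (?scale s x)))\<^sup>2 * (cmod (char_fun d n \<rho> (?scale t x)))\<^sup>2)"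
    unfolding off_energy_def
    by (intro sum.cong refl)
      (simp del: beam_pow.simps add: char_fun_beam_pow_Suc norm_mult power_mult_distrib)
  also have "\<dots> \<le> (\<Sum>x\<in>?C. (cmod (?X (?scale s x)))\<^sup>2 * (1 - magic_gap d n \<rho>)\<^sup>2)"
  proof (intro sum_mono mult_left_mono power_mono)
    fix x assume "x \<in> ?C"
    then have "?scale t x \<in> ?C"
      using bij_betw_apply[OF bij_betw_scale_pt_off_stabilizer[OF t_unit]] by blast
    then show "cmod (char_fun d n \<rho> (?scale t x)) \<le> 1 - magic_gap d n \<rho>"
      by (rule norm_char_fun_off_stabilizer)
  qed auto
  also have "\<dots> = (1 - magic_gap d n \<rho>)\<^sup>2 * (\<Sum>x\<in>?C. (cmod (?X (?scale s x)))\<^sup>2)"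
    by (simp add: sum_distrib_left mult.commute)
  also have "(\<Sum>x\<in>?C. (cmod (?X (?scale s x)))\<^sup>2) = off_energy (beam_pow d n s t k \<rho>)"
    unfolding off_energy_def
    by (rule sum.reindex_bij_betw[OF bij_betw_scale_pt_off_stabilizer[OF s_unit]])
  finally show ?thesis .
qed

lemma off_energy_beam_pow:
  "off_energy (beam_pow d n s t k \<rho>) \<le> ((1 - magic_gap d n \<rho>) ^ k)\<^sup>2 * off_energy \<rho>"
proof (induction k)
  case (Suc k)
  have "off_energy (beam_pow d n s t (Suc k) \<rho>)
          \<le> (1 - magic_gap d n \<rho>)\<^sup>2 * off_energy (beam_pow d n s t k \<rho>)"
    by (rule off_energy_beam_pow_Suc)
  also have "\<dots> \<le> (1 - magic_gap d n \<rho>)\<^sup>2 * (((1 - magic_gap d n \<rho>) ^ k)\<^sup>2 * off_energy \<rho>)"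
    using Suc.IH by (intro mult_left_mono) auto
  finally show ?case by (simp add: power_mult_distrib power_mult[symmetric] mult_ac power2_eq_square)
qed simp

lemma hs_norm_sq_beam_pow_minus_mean:
  "real d ^ n * hs_norm_sq d n (beam_pow d n s t k \<rho> - mean_state d n \<rho>) = off_energy (beam_pow d n s t k \<rho>)"
proof -
  let ?D = "\<lambda>x. (cmod (char_fun d n (beam_pow d n s t k \<rho>) x - char_fun d n (mean_state d n \<rho>) x))\<^sup>2"
  have "real d ^ n * hs_norm_sq d n (beam_pow d n s t k \<rho> - mean_state d n \<rho>) = (\<Sum>x\<in>phase_space d n. ?D x)"
    by (simp add: parseval_char_fun[symmetric] char_fun_diff)
  also have "\<dots> = (\<Sum>x\<in>phase_space d n - stabilizer. ?D x) + (\<Sum>x\<in>stabilizer. ?D x)"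
    by (rule sum.subset_diff) (auto simp: stabilizer_def finite_phase_space)
  also have "(\<Sum>x\<in>stabilizer. ?D x) = 0"
    by (intro sum.neutral) (auto simp: char_fun_beam_pow_stabilizer char_fun_mean_state stabilizer_def)
  also have "(\<Sum>x\<in>phase_space d n - stabilizer. ?D x) = off_energy (beam_pow d n s t k \<rho>)"
    unfolding off_energy_def by (intro sum.cong refl) (simp add: char_fun_mean_state)
  finally show ?thesis by linarith
qed

lemma norm2_beam_pow_minus_mean_le:
  "norm2 d n (beam_pow d n s t k \<rho> - mean_state d n \<rho>)
     \<le> (1 - magic_gap d n \<rho>) ^ k * norm2 d n (\<rho> - mean_state d n \<rho>)"
proof -
  have D: "real d ^ n > 0" using d_pos by simp
  have norm2_eq: "norm2 d n (beam_pow d n s t j \<rho> - mean_state d n \<rho>)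
                    = sqrt (off_energy (beam_pow d n s t j \<rho>) / real d ^ n)" for j
    unfolding norm2_eq_sqrt_hs_norm_sq using hs_norm_sq_beam_pow_minus_mean[of j] D
    by (simp add: field_simps)
  have "sqrt (off_energy (beam_pow d n s t k \<rho>) / real d ^ n)
          \<le> sqrt (((1 - magic_gap d n \<rho>) ^ k)\<^sup>2 * (off_energy \<rho> / real d ^ n))"
    using off_energy_beam_pow[of k] D by (intro real_sqrt_le_mono) (simp add: divide_right_mono)
  also have "\<dots> = sqrt (((1 - magic_gap d n \<rho>) ^ k)\<^sup>2) * sqrt (off_energy \<rho> / real d ^ n)"
    by (rule real_sqrt_mult)
  also have "\<dots> = (1 - magic_gap d n \<rho>) ^ k * sqrt (off_energy \<rho> / real d ^ n)"
    using magic_gap_le_1 by simp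
  finally show ?thesis using norm2_eq[of k] norm2_eq[of 0] by simp
qed

end

lemma not_cong_sum_squares_odd_2:
  fixes s t :: int
  assumes "\<not> 2 dvd s" "\<not> 2 dvd t"
  shows "\<not> [s^2 + t^2 = 1] (mod 2)"
  using assms by (auto simp: cong_def even_iff_mod_2_eq_zero[symmetric])

theorem mainTheorem17:
  fixes d n :: nat and s t :: int and \<rho> :: op
  assumes "prime d" and "n \<ge> 1"
    and "\<not> int d dvd s" and "\<not> int d dvd t"
    and "[s^2 + t^2 = 1] (mod int d)"
    and "is_state d n \<rho>" and "zero_mean d n \<rho>"
  shows "(\<forall>N. norm2 d n (beam_pow d n s t N \<rho> - mean_state d n \<rho>)
              \<le> (1 - magic_gap d n \<rho>) ^ N * norm2 d n (\<rho> - mean_state d n \<rho>))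
         \<and> (\<rho> \<noteq> mean_state d n \<rho> \<longrightarrow> magic_gap d n \<rho> > 0)"
proof -
  have "d \<noteq> 2" using assms(3-5) not_cong_sum_squares_odd_2 by fastforce
  interpret beam_splitter_iteration d n s t \<rho>
    using assms(1,3-7) \<open>d \<noteq> 2\<close> by unfold_locales
  show ?thesis using norm2_beam_pow_minus_mean_le magic_gap_pos by blast
qed

end
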